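(* Let $Y_1,\dots,Y_m$ be independent $\mathbb{Z}^d$-valued random vectors with finite third moments, $W:=\sum_iY_i$, $W^{(i)}:=W-Y_i$. Let $(Y_1',\dots,Y_m')$ be an independent copy of $(Y_1,\dots,Y_m)$ and $K$ uniform on $\{1,\dots,m\}$ independent of all these; set $W':=W-Y_K+Y_K'$, $\xi:=W'-W$, $\sigma^2:=\mathbb{E}\{\xi\xi^T\}$, $\chi:=\mathbb{E}|\xi|^3$, $R_2(W):=\mathbb{E}\{\xi\xi^T\mid W\}-\sigma^2$ and $\tilde\varepsilon_1:=\max_{1\le i\le m}\max_{1\le j\le d}d_{TV}(\mathcal{L}(W^{(i)}),\mathcal{L}(W^{(i)}+e^{(j)}))$. Then $\mathbb{E}\{\xi\mid W\}=-m^{-1}(W-\mathbb{E}W)$, and $\mathbb{E}\|R_2(W)\|_1\le4\tilde\varepsilon_1\,\mathbb{E}\|\xi\|_1^3\le 4\tilde\varepsilon_1d^{3/2}\chi$.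
   Context: $\|M\|_1:=\sum_{i,j}|M_{ij}|$ for a matrix, $\|x\|_1:=\sum_i|x_i|$ for a vector, $|\cdot|$ the Euclidean norm, $e^{(j)}$ the $j$-th coordinate vector. *)

theory Defs
  imports "HOL-Probability.Probability"
begin

definition rvec :: "int ^ 'd \<Rightarrow> real ^ 'd" where
  "rvec z = (\<chi> j. real_of_int (z $ j))"

definition unitv :: "'d \<Rightarrow> int ^ 'd" where
  "unitv j = (\<chi> k. if k = j then 1 else 0)"

definition tv_dist :: "'b measure \<Rightarrow> 'b measure \<Rightarrow> real" where
  "tv_dist P Q = (SUP A \<in> sets P. \<bar>measure P A - measure Q A\<bar>)"

end

theory Submission
  imports Defs
begin

text \<open>
  Write \<open>\<xi> = Y'\<^sub>K - Y\<^sub>K\<close>. Averaging over the uniform index \<open>K\<close>, the regression identity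
  reduces to \<open>E[1\<^sub>B(W) (Y'\<^sub>i - Y\<^sub>i)] = P(W \<in> B) E Y\<^sub>i - E[1\<^sub>B(W) Y\<^sub>i]\<close>, by independence of
  \<open>Y'\<^sub>i\<close> and \<open>W\<close>.

  For the remainder, \<open>R\<^sub>j\<^sub>k\<close> is a function of \<open>W\<close>, so \<open>|R\<^sub>j\<^sub>k| = \<phi>(W) R\<^sub>j\<^sub>k\<close> with
  \<open>\<phi> = sgn R\<^sub>j\<^sub>k\<close>, and \<open>E|R\<^sub>j\<^sub>k|\<close> is the average over \<open>i\<close> of the covariances of \<open>\<phi>(W)\<close> and
  \<open>g(Y'\<^sub>i - Y\<^sub>i)\<close>, \<open>g(u) = u\<^sub>j u\<^sub>k\<close>. Integrating out \<open>W - Y\<^sub>i\<close> and \<open>Y'\<^sub>i\<close> and using that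
  \<open>(Y\<^sub>i, Y'\<^sub>i)\<close> is exchangeable, such a covariance equals
  \<open>E[(A(Y\<^sub>i) - A(Y'\<^sub>i)) (H(Y\<^sub>i) - H(Y'\<^sub>i))] / 2\<close> with \<open>A(y) = E \<phi>(W - Y\<^sub>i + y)\<close> and
  \<open>H(y) = E g(Y'\<^sub>i - y)\<close>. A unit lattice step moves the law of \<open>W - Y\<^sub>i\<close> by at most
  \<open>\<epsilon>\<close> in total variation, so \<open>A\<close> is \<open>2\<epsilon>\<close>-Lipschitz for the \<open>\<ell>\<^sub>1\<close> distance; \<open>H\<close> is
  Lipschitz with a constant given by first moments of \<open>Y'\<^sub>i - y\<close>, and the elementary
  bound \<open>c\<^sup>2 a \<le> c\<^sup>3 + a\<^sup>3\<close> turns the product into \<open>4 \<epsilon> E|\<xi>|\<^sub>1\<^sup>3\<close>.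
\<close>

instance vec :: (countable, finite) countable
proof (rule countable_classI[of "\<lambda>x. to_nat (vec_nth x)"])
  fix x y :: "'a ^ 'b"
  assume "to_nat (vec_nth x) = to_nat (vec_nth y)"
  then have "vec_nth x = vec_nth y" by simp
  then show "x = y" by (simp add: vec_nth_inject)
qed

section \<open>Random variables with countable range\<close>

lemma measurable_count_space_binop:
  fixes f :: "'x \<Rightarrow> 'a::countable" and g :: "'x \<Rightarrow> 'b::countable"
  assumes f: "f \<in> measurable N (count_space UNIV)" and g: "g \<in> measurable N (count_space UNIV)"
  shows "(\<lambda>x. h (f x) (g x)) \<in> measurable N (count_space UNIV)"
proof -
  have "(\<lambda>x. (f x, g x)) \<in> measurable N (count_space UNIV \<Otimes>\<^sub>M count_space UNIV)"
    using f g by (rule measurable_Pair)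
  then have "(\<lambda>x. (f x, g x)) \<in> measurable N (count_space UNIV)"
    by (simp add: pair_measure_countable)
  from measurable_comp[OF this, of "\<lambda>p. h (fst p) (snd p)" "count_space UNIV"]
  show ?thesis by (simp add: comp_def)
qed

lemma measurable_count_space_sum:
  fixes f :: "'i \<Rightarrow> 'x \<Rightarrow> 'a::{countable,comm_monoid_add}"
  assumes "finite S" "\<And>i. i \<in> S \<Longrightarrow> f i \<in> measurable N (count_space UNIV)"
  shows "(\<lambda>x. \<Sum>i\<in>S. f i x) \<in> measurable N (count_space UNIV)"
  using assms
proof (induction S rule: finite_induct)
  case (insert a S)
  have "(\<lambda>x. f a x + (\<Sum>i\<in>S. f i x)) \<in> measurable N (count_space UNIV)"
    by (rule measurable_count_space_binop[where h="(+)"]) (use insert in auto)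
  then show ?case using insert by simp
qed simp

lemma measurable_count_space_compose:
  fixes f :: "'x \<Rightarrow> 'a::countable"
  assumes "f \<in> measurable N (count_space UNIV)" and "\<And>a. h a \<in> space N'"
  shows "(\<lambda>x. h (f x)) \<in> measurable N N'"
  using measurable_comp[OF assms(1), of h N'] assms(2) by (auto simp add: comp_def)

lemma measurable_PiM_component_count_space:
  fixes h :: "'b::countable \<Rightarrow> 'c"
  assumes "t \<in> A" and "\<And>b. h b \<in> space N"
  shows "(\<lambda>r. h (r t)) \<in> measurable (PiM A (\<lambda>_. count_space UNIV)) N"
  by (rule measurable_count_space_compose[OF measurable_component_singleton[OF assms(1)] assms(2)])

lemma integrable_bounded_mult:
  fixes f a :: "'a \<Rightarrow> real"
  assumes f: "integrable M f" and a: "a \<in> borel_measurable M" and b: "\<And>x. \<bar>a x\<bar> \<le> 1"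
  shows "integrable M (\<lambda>x. a x * f x)"
proof (rule Bochner_Integration.integrable_bound[OF f])
  show "(\<lambda>x. a x * f x) \<in> borel_measurable M" using a borel_measurable_integrable[OF f] by measurable
  show "AE x in M. norm (a x * f x) \<le> norm (f x)"
    by (rule AE_I2) (simp add: abs_mult mult_left_le_one_le b)
qed

lemma
  fixes X X' :: "'a \<Rightarrow> 'b"
  assumes X: "X \<in> measurable M (count_space UNIV)" and X': "X' \<in> measurable M (count_space UNIV)"
    and same: "distr M (count_space UNIV) X' = distr M (count_space UNIV) X"
  shows integrable_comp_eq_of_distr_eq:
      "integrable M (\<lambda>x. f (X' x)) \<longleftrightarrow> integrable M (\<lambda>x. (f (X x) :: real))"
    and integral_comp_eq_of_distr_eq: "(\<integral>x. f (X' x) \<partial>M) = (\<integral>x. (f (X x) :: real) \<partial>M)"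
proof -
  have "integrable M (\<lambda>x. f (X' x)) \<longleftrightarrow> integrable (distr M (count_space UNIV) X') f"
    by (rule integrable_distr_eq[symmetric, OF X']) simp
  also have "\<dots> \<longleftrightarrow> integrable M (\<lambda>x. f (X x))"
    unfolding same by (rule integrable_distr_eq[OF X]) simp
  finally show "integrable M (\<lambda>x. f (X' x)) \<longleftrightarrow> integrable M (\<lambda>x. f (X x))" .
  have "(\<integral>x. f (X' x) \<partial>M) = integral\<^sup>L (distr M (count_space UNIV) X') f"
    by (rule integral_distr[symmetric, OF X']) simp
  also have "\<dots> = (\<integral>x. f (X x) \<partial>M)"
    unfolding same by (rule integral_distr[OF X]) simp
  finally show "(\<integral>x. f (X' x) \<partial>M) = (\<integral>x. f (X x) \<partial>M)" .
qed

context prob_space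
begin

lemma indep_var_commute:
  assumes "indep_var S X T Y"
  shows "indep_var T Y S X"
proof -
  define SX where "SX = sigma_sets (space M) {X -` A \<inter> space M |A. A \<in> sets S}"
  define SY where "SY = sigma_sets (space M) {Y -` A \<inter> space M |A. A \<in> sets T}"
  have rv: "random_variable S X" "random_variable T Y" and ev: "SX \<subseteq> events" "SY \<subseteq> events"
    and indep: "\<forall>a\<in>SX. \<forall>b\<in>SY. prob (a \<inter> b) = prob a * prob b"
    using assms unfolding indep_var_eq indep_sets2_eq SX_def SY_def by auto
  have "\<forall>a\<in>SY. \<forall>b\<in>SX. prob (a \<inter> b) = prob a * prob b"
  proof (intro ballI)
    fix a b assume "a \<in> SY" "b \<in> SX"
    with indep have "prob (b \<inter> a) = prob b * prob a" by blast
    then show "prob (a \<inter> b) = prob a * prob b" by (simp add: Int_commute mult.commute)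
  qed
  with rv ev show ?thesis
    unfolding indep_var_eq indep_sets2_eq SX_def[symmetric] SY_def[symmetric] by simp
qed

lemma
  fixes X Z :: "'a \<Rightarrow> 'b::countable" and f :: "'b \<Rightarrow> 'b \<Rightarrow> real"
  assumes ind: "indep_var (count_space UNIV) X (count_space UNIV) Z"
    and int: "integrable M (\<lambda>x. f (X x) (Z x))"
  shows integrable_indep_var_iterated: "integrable M (\<lambda>x. \<integral>y. f (X x) (Z y) \<partial>M)"
    and integral_indep_var_iterated:
      "(\<integral>x. f (X x) (Z x) \<partial>M) = (\<integral>x. (\<integral>y. f (X x) (Z y) \<partial>M) \<partial>M)"
proof -
  have X: "X \<in> measurable M (count_space UNIV)" and Z: "Z \<in> measurable M (count_space UNIV)"
    using ind by (auto dest: indep_var_rv1 indep_var_rv2)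
  define D1 where "D1 = distr M (count_space UNIV) X"
  define D2 where "D2 = distr M (count_space UNIV) Z"
  interpret D1: prob_space D1 unfolding D1_def using X by (rule prob_space_distr)
  interpret D2: prob_space D2 unfolding D2_def using Z by (rule prob_space_distr)
  interpret D12: pair_sigma_finite D1 D2 ..
  have cs: "count_space (UNIV::'b set) \<Otimes>\<^sub>M count_space (UNIV::'b set) = count_space UNIV"
    by (simp add: pair_measure_countable)
  have XZ: "(\<lambda>x. (X x, Z x)) \<in> measurable M (count_space UNIV)"
    using measurable_Pair[OF X Z] cs by simp
  have prod: "D1 \<Otimes>\<^sub>M D2 = distr M (count_space UNIV) (\<lambda>x. (X x, Z x))"
    using ind cs unfolding D1_def D2_def indep_var_distribution_eq by simp
  have intP: "integrable (D1 \<Otimes>\<^sub>M D2) (\<lambda>p. f (fst p) (snd p))"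
    unfolding prod by (subst integrable_distr_eq[OF XZ]) (auto simp: int)
  have inner: "\<And>a. (\<integral>b. f a b \<partial>D2) = (\<integral>y. f a (Z y) \<partial>M)"
    unfolding D2_def by (rule integral_distr[OF Z]) simp
  have "integrable D1 (\<lambda>a. \<integral>b. f a b \<partial>D2)"
    using D12.integrable_fst'[OF intP] by simp
  then show "integrable M (\<lambda>x. \<integral>y. f (X x) (Z y) \<partial>M)"
    unfolding inner D1_def by (subst (asm) integrable_distr_eq[OF X]) auto
  have "(\<integral>x. f (X x) (Z x) \<partial>M) = integral\<^sup>L (D1 \<Otimes>\<^sub>M D2) (\<lambda>p. f (fst p) (snd p))"
    unfolding prod by (subst integral_distr[OF XZ]) auto
  also have "\<dots> = (\<integral>a. (\<integral>b. f a b \<partial>D2) \<partial>D1)"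
    using D12.integral_fst'[OF intP] by simp
  also have "\<dots> = (\<integral>x. (\<integral>y. f (X x) (Z y) \<partial>M) \<partial>M)"
    unfolding inner D1_def by (subst integral_distr[OF X]) auto
  finally show "(\<integral>x. f (X x) (Z x) \<partial>M) = (\<integral>x. (\<integral>y. f (X x) (Z y) \<partial>M) \<partial>M)" .
qed

lemma integral_indep_var_bounded_mult:
  fixes Z Z' :: "'a \<Rightarrow> 'b::countable" and A H :: "'b \<Rightarrow> real"
  assumes indep: "indep_var (count_space UNIV) Z (count_space UNIV) Z'"
    and A: "\<And>y. \<bar>A y\<bar> \<le> 1" and H: "integrable M (\<lambda>x. H (Z' x))"
  shows "(\<integral>x. A (Z x) * H (Z' x) \<partial>M) = (\<integral>x. A (Z x) \<partial>M) * (\<integral>x. H (Z' x) \<partial>M)"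
proof -
  have Z: "Z \<in> measurable M (count_space UNIV)" using indep by (rule indep_var_rv1)
  have AZ: "(\<lambda>x. A (Z x)) \<in> borel_measurable M"
    by (rule measurable_count_space_compose[OF Z]) simp
  have "integrable M (\<lambda>x. A (Z x))"
    by (rule integrable_const_bound[where B=1]) (use A AZ in auto)
  moreover have "indep_var borel (A \<circ> Z) borel (H \<circ> Z')"
    by (rule indep_var_compose[OF indep]) auto
  ultimately show ?thesis
    using indep_var_lebesgue_integral[of "\<lambda>x. A (Z x)" "\<lambda>x. H (Z' x)"] H by (simp add: comp_def)
qed

lemma
  fixes X X' :: "'a \<Rightarrow> 'b::countable" and A H :: "'b \<Rightarrow> real"
  assumes indep: "indep_var (count_space UNIV) X (count_space UNIV) X'"
    and same: "distr M (count_space UNIV) X' = distr M (count_space UNIV) X"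
    and A: "\<And>y. \<bar>A y\<bar> \<le> 1" and H: "integrable M (\<lambda>x. H (X x))"
  shows integrable_exchangeable_product:
      "integrable M (\<lambda>x. (A (X x) - A (X' x)) * (H (X x) - H (X' x)))"
    and integral_exchangeable_product:
      "(\<integral>x. (A (X x) - A (X' x)) * (H (X x) - H (X' x)) \<partial>M)
         = 2 * ((\<integral>x. A (X x) * H (X x) \<partial>M) - (\<integral>x. A (X x) \<partial>M) * (\<integral>x. H (X x) \<partial>M))"
proof -
  have X: "X \<in> measurable M (count_space UNIV)" and X': "X' \<in> measurable M (count_space UNIV)"
    using indep by (auto dest: indep_var_rv1 indep_var_rv2)
  note same_integral = integral_comp_eq_of_distr_eq[OF X X' same]
  have H': "integrable M (\<lambda>x. H (X' x))"
    using H integrable_comp_eq_of_distr_eq[OF X X' same, of H] by simp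
  have AH: "integrable M (\<lambda>x. A (Z x) * H (Z' x))"
    if "Z \<in> measurable M (count_space UNIV)" "integrable M (\<lambda>x. H (Z' x))" for Z Z'
    by (rule integrable_bounded_mult[OF that(2) measurable_count_space_compose[OF that(1)] A]) simp
  have expand: "\<And>x. (A (X x) - A (X' x)) * (H (X x) - H (X' x)) =
      A (X x) * H (X x) - A (X x) * H (X' x) - A (X' x) * H (X x) + A (X' x) * H (X' x)"
    by (simp add: algebra_simps)
  note ints = AH[OF X H] AH[OF X H'] AH[OF X' H] AH[OF X' H']
  show "integrable M (\<lambda>x. (A (X x) - A (X' x)) * (H (X x) - H (X' x)))"
    unfolding expand using ints by simp
  have "(\<integral>x. (A (X x) - A (X' x)) * (H (X x) - H (X' x)) \<partial>M) =
      (\<integral>x. A (X x) * H (X x) \<partial>M) - (\<integral>x. A (X x) * H (X' x) \<partial>M)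
      - (\<integral>x. A (X' x) * H (X x) \<partial>M) + (\<integral>x. A (X' x) * H (X' x) \<partial>M)"
    unfolding expand using ints by simp
  also have "\<dots> = 2 * ((\<integral>x. A (X x) * H (X x) \<partial>M) - (\<integral>x. A (X x) \<partial>M) * (\<integral>x. H (X x) \<partial>M))"
    using integral_indep_var_bounded_mult[where A=A, OF indep A H']
      integral_indep_var_bounded_mult[where A=A, OF indep_var_commute[OF indep] A H]
      same_integral[of A] same_integral[of H] same_integral[of "\<lambda>y. A y * H y"]
    by simp
  finally show "(\<integral>x. (A (X x) - A (X' x)) * (H (X x) - H (X' x)) \<partial>M)
      = 2 * ((\<integral>x. A (X x) * H (X x) \<partial>M) - (\<integral>x. A (X x) \<partial>M) * (\<integral>x. H (X x) \<partial>M))" .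
qed

end

section \<open>Sign-valued test functions and total variation\<close>

lemma measure_diff_le_tv_dist:
  assumes P: "prob_space P" and Q: "prob_space Q" and S: "S \<in> sets P"
  shows "\<bar>measure P S - measure Q S\<bar> \<le> tv_dist P Q"
  unfolding tv_dist_def
proof (rule cSUP_upper[OF S])
  have "\<And>A. \<bar>measure P A - measure Q A\<bar> \<le> 1"
    using prob_space.prob_le_1[OF P] prob_space.prob_le_1[OF Q] by (smt (verit) measure_nonneg)
  then show "bdd_above ((\<lambda>A. \<bar>measure P A - measure Q A\<bar>) ` sets P)"
    by (intro bdd_aboveI[of _ 1]) auto
qed

context prob_space
begin

lemma integrable_sign_valued:
  fixes X :: "'a \<Rightarrow> 'b::countable" and \<psi> :: "'b \<Rightarrow> real"
  assumes X: "X \<in> measurable M (count_space UNIV)" and \<psi>: "\<And>w. \<psi> w \<in> {-1,0,1}"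
  shows "integrable M (\<lambda>x. \<psi> (X x))"
proof (rule integrable_const_bound[where B=1])
  have "\<bar>\<psi> w\<bar> \<le> 1" for w using \<psi>[of w] by auto
  then show "AE x in M. norm (\<psi> (X x)) \<le> 1" by simp
  show "(\<lambda>x. \<psi> (X x)) \<in> borel_measurable M" by (rule measurable_count_space_compose[OF X]) simp
qed

lemma integral_sign_valued:
  fixes X :: "'a \<Rightarrow> 'b" and \<psi> :: "'b \<Rightarrow> real"
  assumes X: "X \<in> measurable M (count_space UNIV)" and \<psi>: "\<And>w. \<psi> w \<in> {-1,0,1}"
  shows "(\<integral>x. \<psi> (X x) \<partial>M) = measure (distr M (count_space UNIV) X) {w. \<psi> w = 1}
           - measure (distr M (count_space UNIV) X) {w. \<psi> w = -1}"
proof -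
  let ?Q = "distr M (count_space UNIV) X"
  interpret Q: prob_space ?Q by (rule prob_space_distr[OF X])
  have split: "\<psi> w = indicator {w. \<psi> w = 1} w - indicator {w. \<psi> w = -1} w" for w
    using \<psi>[of w] by (auto simp: indicator_def)
  have "(\<integral>x. \<psi> (X x) \<partial>M) = (\<integral>w. \<psi> w \<partial>?Q)"
    by (rule integral_distr[symmetric, OF X]) simp
  also have "\<dots> = (\<integral>w. indicator {w. \<psi> w = 1} w - indicator {w. \<psi> w = -1} w \<partial>?Q)"
    by (subst split) simp
  also have "\<dots> = measure ?Q {w. \<psi> w = 1} - measure ?Q {w. \<psi> w = -1}"
    by (subst Bochner_Integration.integral_diff)
       (auto simp: Q.emeasure_eq_measure intro!: integrable_real_indicator)
  finally show ?thesis .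
qed

lemma abs_integral_sign_valued_le_1:
  fixes X :: "'a \<Rightarrow> 'b" and \<psi> :: "'b \<Rightarrow> real"
  assumes X: "X \<in> measurable M (count_space UNIV)" and \<psi>: "\<And>w. \<psi> w \<in> {-1,0,1}"
  shows "\<bar>\<integral>x. \<psi> (X x) \<partial>M\<bar> \<le> 1"
proof -
  interpret Q: prob_space "distr M (count_space UNIV) X" by (rule prob_space_distr[OF X])
  have "measure (distr M (count_space UNIV) X) {w. \<psi> w = c} \<le> 1" for c
    by (rule Q.prob_le_1)
  from this[of 1] this[of "-1"] show ?thesis
    using integral_sign_valued[where \<psi>=\<psi>, OF X \<psi>] by (smt (verit) measure_nonneg)
qed

lemma integral_sign_valued_diff_le_tv_dist:
  fixes X Z :: "'a \<Rightarrow> 'b" and \<psi> :: "'b \<Rightarrow> real"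
  assumes X: "X \<in> measurable M (count_space UNIV)" and Z: "Z \<in> measurable M (count_space UNIV)"
    and \<psi>: "\<And>w. \<psi> w \<in> {-1,0,1}"
  shows "\<bar>(\<integral>x. \<psi> (X x) \<partial>M) - (\<integral>x. \<psi> (Z x) \<partial>M)\<bar>
           \<le> 2 * tv_dist (distr M (count_space UNIV) X) (distr M (count_space UNIV) Z)"
proof -
  let ?P = "distr M (count_space UNIV) X" and ?Q = "distr M (count_space UNIV) Z"
  have "\<bar>measure ?P {w. \<psi> w = c} - measure ?Q {w. \<psi> w = c}\<bar> \<le> tv_dist ?P ?Q" for c
    by (rule measure_diff_le_tv_dist[OF prob_space_distr[OF X] prob_space_distr[OF Z]]) simp
  from this[of 1] this[of "-1"] show ?thesis
    using integral_sign_valued[where \<psi>=\<psi>, OF X \<psi>] integral_sign_valued[where \<psi>=\<psi>, OF Z \<psi>] by linarith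
qed

end

section \<open>The \<open>\<ell>\<^sub>1\<close> norm on the integer lattice\<close>

definition norm1 :: "int ^ 'd \<Rightarrow> real" where
  "norm1 u = (\<Sum>j\<in>UNIV. \<bar>real_of_int (u $ j)\<bar>)"

definition coord_prod :: "'d \<Rightarrow> 'd \<Rightarrow> int ^ 'd \<Rightarrow> real" where
  "coord_prod j k u = real_of_int (u $ j) * real_of_int (u $ k)"

lemma norm1_nonneg [simp]: "0 \<le> norm1 u"
  by (simp add: norm1_def sum_nonneg)

lemma norm1_diff_le: "norm1 (a - b) \<le> norm1 a + norm1 b"
  unfolding norm1_def by (simp add: sum.distrib[symmetric] sum_mono abs_triangle_ineq4)

lemma abs_coord_le_norm1: "\<bar>real_of_int (u $ j)\<bar> \<le> norm1 u"
  unfolding norm1_def by (rule member_le_sum) auto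

lemma norm1_rvec: "norm1 u = (\<Sum>j\<in>UNIV. \<bar>rvec u $ j\<bar>)"
  by (simp add: norm1_def rvec_def)

lemma cube_add_le: "0 \<le> a \<Longrightarrow> 0 \<le> b \<Longrightarrow> ((a::real) + b) ^ 3 \<le> 4 * (a ^ 3 + b ^ 3)"
proof -
  assume "0 \<le> a" "0 \<le> b"
  then have "0 \<le> 3 * (a + b) * (a - b)^2" by simp
  then show ?thesis by (simp add: power2_eq_square power3_eq_cube algebra_simps)
qed

lemma sq_mult_le_cube_add: "0 \<le> c \<Longrightarrow> 0 \<le> a \<Longrightarrow> (c::real) * c * a \<le> c ^ 3 + a ^ 3"
proof (cases "c \<le> a")
  case True
  assume "0 \<le> c" "0 \<le> a"
  then have "c * c * a \<le> a * a * a" using True by (intro mult_mono) (auto intro: mult_mono)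
  then show ?thesis using \<open>0 \<le> c\<close> by (simp add: power3_eq_cube) (smt (verit) mult_nonneg_nonneg)
next
  case False
  assume "0 \<le> c" "0 \<le> a"
  then have "c * c * a \<le> c * c * c" using False by (intro mult_left_mono) auto
  then show ?thesis using \<open>0 \<le> a\<close> by (simp add: power3_eq_cube) (smt (verit) mult_nonneg_nonneg)
qed

lemma norm1_diff_cube_le: "norm1 (a - b) ^ 3 \<le> 4 * (norm1 a ^ 3 + norm1 b ^ 3)"
  by (rule order_trans[OF power_mono[OF norm1_diff_le] cube_add_le]) auto

lemma sum_abs_le_sqrt_card_mult_norm:
  "(\<Sum>j\<in>UNIV. \<bar>v $ j\<bar>) \<le> sqrt (real CARD('d)) * norm (v :: real ^ 'd)"
proof -
  have "(\<Sum>j\<in>UNIV. \<bar>v $ j\<bar> * \<bar>1\<bar>) \<le> L2_set (\<lambda>j. v $ j) UNIV * L2_set (\<lambda>j::'d. 1::real) UNIV"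
    using L2_set_mult_ineq[where f="\<lambda>j. v $ j" and g="\<lambda>j. 1" and A=UNIV] by simp
  then show ?thesis
    by (simp add: norm_vec_def L2_set_def L2_set_constant mult.commute)
qed

lemma sum_abs_cube_le_card_powr_mult_norm_cube:
  "(\<Sum>j\<in>UNIV. \<bar>v $ j\<bar>) ^ 3 \<le> real CARD('d) powr (3/2) * norm (v :: real ^ 'd) ^ 3"
proof -
  have "(\<Sum>j\<in>UNIV. \<bar>v $ j\<bar>) ^ 3 \<le> (sqrt (real CARD('d)) * norm v) ^ 3"
    by (rule power_mono[OF sum_abs_le_sqrt_card_mult_norm]) (simp add: sum_nonneg)
  also have "\<dots> = sqrt (real CARD('d)) ^ 3 * norm v ^ 3" by (simp add: power_mult_distrib)
  also have "sqrt (real CARD('d)) ^ 3 = real CARD('d) powr (3/2)"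
    by (simp add: powr_half_sqrt[symmetric] powr_power)
  finally show ?thesis .
qed

lemma sum_abs_coord_prod_diff_le:
  "(\<Sum>j\<in>UNIV. \<Sum>k\<in>UNIV. \<bar>coord_prod j k a - coord_prod j k b\<bar>) \<le> norm1 (a - b) * (norm1 a + norm1 b)"
proof -
  let ?r = "\<lambda>u j. real_of_int (u $ j)"
  have "\<bar>coord_prod j k a - coord_prod j k b\<bar> \<le> \<bar>?r (a - b) j\<bar> * \<bar>?r a k\<bar> + \<bar>?r b j\<bar> * \<bar>?r (a - b) k\<bar>"
    for j k
  proof -
    have "coord_prod j k a - coord_prod j k b = ?r (a - b) j * ?r a k + ?r b j * ?r (a - b) k"
      by (simp add: coord_prod_def algebra_simps)
    then show ?thesis by (metis abs_mult abs_triangle_ineq)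
  qed
  then have "(\<Sum>j\<in>UNIV. \<Sum>k\<in>UNIV. \<bar>coord_prod j k a - coord_prod j k b\<bar>) \<le>
        (\<Sum>j\<in>UNIV. \<Sum>k\<in>UNIV. \<bar>?r (a - b) j\<bar> * \<bar>?r a k\<bar> + \<bar>?r b j\<bar> * \<bar>?r (a - b) k\<bar>)"
    by (intro sum_mono)
  also have "\<dots> = norm1 (a - b) * norm1 a + norm1 b * norm1 (a - b)"
    by (simp add: sum.distrib norm1_def sum_product)
  finally show ?thesis by (simp add: algebra_simps)
qed

lemma le_one_plus_cube: "0 \<le> t \<Longrightarrow> (t::real) \<le> 1 + t ^ 3"
proof (cases "t \<le> 1")
  case False
  then have "t * 1 \<le> t * (t * t)"
    by (intro mult_left_mono) (auto simp: less_1_mult less_eq_real_def)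
  then show ?thesis by (simp add: power3_eq_cube)
qed (simp add: add_increasing2)

lemma sq_le_one_plus_cube: "0 \<le> t \<Longrightarrow> (t::real) ^ 2 \<le> 1 + t ^ 3"
proof (cases "t \<le> 1")
  case True
  assume "0 \<le> t"
  with True have "t ^ 2 \<le> 1" by (simp add: power_le_one)
  with \<open>0 \<le> t\<close> show ?thesis by (simp add: add_increasing2)
next
  case False
  then have "t ^ 2 * 1 \<le> t ^ 2 * t" by (intro mult_left_mono) auto
  then show ?thesis by (simp add: power3_eq_cube power2_eq_square)
qed

definition cubically_bounded :: "(int ^ 'd \<Rightarrow> real) \<Rightarrow> bool" where
  "cubically_bounded h \<longleftrightarrow> (\<exists>c. \<forall>u. \<bar>h u\<bar> \<le> c * (1 + norm1 u ^ 3))"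

lemma cubically_boundedI: "(\<And>u. \<bar>h u\<bar> \<le> 1 + norm1 u ^ 3) \<Longrightarrow> cubically_bounded h"
  unfolding cubically_bounded_def by (rule exI[of _ 1]) simp

lemma cubically_bounded_norm1: "cubically_bounded norm1"
  by (rule cubically_boundedI) (simp add: le_one_plus_cube)

lemma cubically_bounded_norm1_cube: "cubically_bounded (\<lambda>u. norm1 u ^ 3)"
  by (rule cubically_boundedI) simp

lemma cubically_bounded_coord: "cubically_bounded (\<lambda>u. real_of_int (u $ j))"
  by (rule cubically_boundedI) (rule order_trans[OF abs_coord_le_norm1 le_one_plus_cube], simp)

lemma cubically_bounded_coord_prod: "cubically_bounded (coord_prod j k)"
proof (rule cubically_boundedI)
  fix u
  have "\<bar>coord_prod j k u\<bar> \<le> norm1 u ^ 2"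
    unfolding coord_prod_def power2_eq_square abs_mult by (intro mult_mono abs_coord_le_norm1) auto
  then show "\<bar>coord_prod j k u\<bar> \<le> 1 + norm1 u ^ 3"
    using sq_le_one_plus_cube[OF norm1_nonneg] by (rule order_trans)
qed

context prob_space
begin

lemma integrable_cubically_bounded:
  fixes f :: "'a \<Rightarrow> int ^ 'd" and h :: "int ^ 'd \<Rightarrow> real"
  assumes f: "f \<in> measurable M (count_space UNIV)" and f3: "integrable M (\<lambda>x. norm1 (f x) ^ 3)"
    and h: "cubically_bounded h"
  shows "integrable M (\<lambda>x. h (f x))"
proof -
  obtain c where c: "\<And>u. \<bar>h u\<bar> \<le> c * (1 + norm1 u ^ 3)"
    using h unfolding cubically_bounded_def by blast
  show ?thesis
  proof (rule Bochner_Integration.integrable_bound)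
    show "integrable M (\<lambda>x. c * (1 + norm1 (f x) ^ 3))" using f3 by simp
    show "(\<lambda>x. h (f x)) \<in> borel_measurable M" by (rule measurable_count_space_compose[OF f]) simp
    show "AE x in M. norm (h (f x)) \<le> norm (c * (1 + norm1 (f x) ^ 3))"
      using c by (intro AE_I2) (simp add: order_trans[OF c abs_ge_self])
  qed
qed

lemma integrable_norm1_diff_cube:
  fixes f g :: "'a \<Rightarrow> int ^ 'd"
  assumes f: "f \<in> measurable M (count_space UNIV)" and g: "g \<in> measurable M (count_space UNIV)"
    and f3: "integrable M (\<lambda>x. norm1 (f x) ^ 3)" and g3: "integrable M (\<lambda>x. norm1 (g x) ^ 3)"
  shows "integrable M (\<lambda>x. norm1 (f x - g x) ^ 3)"
proof (rule Bochner_Integration.integrable_bound)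
  show "integrable M (\<lambda>x. 4 * (norm1 (f x) ^ 3 + norm1 (g x) ^ 3))" using f3 g3 by simp
  show "(\<lambda>x. norm1 (f x - g x) ^ 3) \<in> borel_measurable M"
    by (rule measurable_count_space_compose[OF measurable_count_space_binop[OF f g]]) simp
  show "AE x in M. norm (norm1 (f x - g x) ^ 3) \<le> norm (4 * (norm1 (f x) ^ 3 + norm1 (g x) ^ 3))"
    by (rule AE_I2) (use norm1_diff_cube_le in simp)
qed

end

definition norm1_int :: "int ^ 'd \<Rightarrow> int" where
  "norm1_int u = (\<Sum>j\<in>UNIV. \<bar>u $ j\<bar>)"

lemma norm1_eq_of_int_norm1_int: "norm1 u = real_of_int (norm1_int u)"
  by (simp add: norm1_def norm1_int_def)

lemma norm1_int_nonneg: "0 \<le> norm1_int u"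
  by (simp add: norm1_int_def sum_nonneg)

lemma norm1_int_eq_0_iff: "norm1_int u = 0 \<longleftrightarrow> u = 0"
  unfolding norm1_int_def by (subst sum_nonneg_eq_0_iff) (auto simp: vec_eq_iff)

lemma norm1_int_sub_unitv:
  fixes u :: "int ^ 'd"
  assumes "u $ j \<noteq> 0"
  shows "norm1_int (u - sgn (u $ j) *s unitv j) = norm1_int u - 1"
proof -
  have split: "norm1_int v = \<bar>v $ j\<bar> + (\<Sum>k\<in>UNIV - {j}. \<bar>v $ k\<bar>)" for v :: "int ^ 'd"
    unfolding norm1_int_def by (subst sum.remove[of _ j]) auto
  have "\<bar>u $ j - sgn (u $ j)\<bar> = \<bar>u $ j\<bar> - 1"
    using assms by (auto simp: sgn_if)
  then show ?thesis
    unfolding split[of u] split[of "u - _"] by (simp add: unitv_def)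
qed

lemma norm1_lipschitz_of_unit_steps:
  fixes A :: "int ^ 'd \<Rightarrow> real"
  assumes step: "\<And>y j. \<bar>A y - A (y + unitv j)\<bar> \<le> c"
  shows "\<bar>A y - A z\<bar> \<le> c * norm1 (z - y)"
proof -
  have "\<bar>A y - A z\<bar> \<le> c * real n" if "nat (norm1_int (z - y)) = n" for n
    using that
  proof (induction n arbitrary: y)
    case 0
    then have "z = y" using norm1_int_nonneg[of "z - y"] norm1_int_eq_0_iff[of "z - y"] by simp
    then show ?case by simp
  next
    case (Suc n)
    then obtain j where j: "(z - y) $ j \<noteq> 0"
      by (metis norm1_int_eq_0_iff nat_zero_as_int old.nat.distinct(1) vec_eq_iff zero_index)
    define s where "s = sgn ((z - y) $ j) *s unitv j"
    have "norm1_int (z - (y + s)) = norm1_int (z - y) - 1"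
      using norm1_int_sub_unitv[OF j] by (simp add: s_def algebra_simps)
    then have "\<bar>A (y + s) - A z\<bar> \<le> c * real n" using Suc by (intro Suc.IH) simp
    moreover have "\<bar>A y - A (y + s)\<bar> \<le> c"
    proof (cases "(z - y) $ j > 0")
      case True
      then show ?thesis using step[of y j] by (simp add: s_def)
    next
      case False
      then have "s = - unitv j" using j by (simp add: s_def vec_eq_iff)
      then show ?thesis using step[of "y + s" j] by (simp add: abs_minus_commute)
    qed
    ultimately have "\<bar>A y - A z\<bar> \<le> c + c * real n" by (smt (verit))
    then show ?case by (simp add: distrib_left)
  qed
  then show ?thesis
    using norm1_int_nonneg[of "z - y"] by (simp add: norm1_eq_of_int_norm1_int)
qed

section \<open>Resampling one summand of a sum of independent vectors\<close>

locale resampling = prob_space M for M :: "'a measure" +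
  fixes m :: nat and Y Y' :: "nat \<Rightarrow> 'a \<Rightarrow> int ^ 'd" and K :: "'a \<Rightarrow> nat"
  assumes m_pos: "m \<ge> 1"
    and Y_meas: "\<And>i. i \<in> {1..m} \<Longrightarrow> Y i \<in> measurable M (count_space UNIV)"
    and Y'_meas: "\<And>i. i \<in> {1..m} \<Longrightarrow> Y' i \<in> measurable M (count_space UNIV)"
    and K_meas: "K \<in> measurable M (count_space UNIV)"
    and third_moments: "\<And>i. i \<in> {1..m} \<Longrightarrow> integrable M (\<lambda>x. norm (rvec (Y i x)) ^ 3)"
    and indep: "indep_vars (\<lambda>_. count_space UNIV)
          (\<lambda>t x. case t of Some (Inl i) \<Rightarrow> Inl (Y i x)
                         | Some (Inr i) \<Rightarrow> Inl (Y' i x)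
                         | None \<Rightarrow> Inr (K x))
          (Some ` Inl ` {1..m} \<union> Some ` Inr ` {1..m} \<union> {None})"
    and copy: "\<And>i. i \<in> {1..m} \<Longrightarrow>
          distr M (count_space UNIV) (Y' i) = distr M (count_space UNIV) (Y i)"
    and K_range: "\<And>x. x \<in> space M \<Longrightarrow> K x \<in> {1..m}"
    and K_unif: "\<And>k. k \<in> {1..m} \<Longrightarrow> measure M {x \<in> space M. K x = k} = 1 / real m"
begin

definition family :: "(nat + nat) option \<Rightarrow> 'a \<Rightarrow> int ^ 'd + nat" where
  "family t x = (case t of Some (Inl i) \<Rightarrow> Inl (Y i x) | Some (Inr i) \<Rightarrow> Inl (Y' i x) | None \<Rightarrow> Inr (K x))"

definition family_index :: "(nat + nat) option set" where
  "family_index = Some ` Inl ` {1..m} \<union> Some ` Inr ` {1..m} \<union> {None}"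

definition W :: "'a \<Rightarrow> int ^ 'd" where
  "W x = (\<Sum>i\<in>{1..m}. Y i x)"

definition Wi :: "nat \<Rightarrow> 'a \<Rightarrow> int ^ 'd" where
  "Wi i x = W x - Y i x"

definition xi :: "'a \<Rightarrow> int ^ 'd" where
  "xi x = Y' (K x) x - Y (K x) x"

lemma family_simps [simp]:
  "family (Some (Inl i)) x = Inl (Y i x)" "family (Some (Inr i)) x = Inl (Y' i x)"
  "family None x = Inr (K x)"
  by (simp_all add: family_def)

lemma indep_var_family_blocks:
  assumes "A \<inter> B = {}" "A \<subseteq> family_index" "B \<subseteq> family_index"
    and "g1 \<in> measurable (PiM A (\<lambda>_. count_space UNIV)) N1"
    and "g2 \<in> measurable (PiM B (\<lambda>_. count_space UNIV)) N2"
  shows "indep_var N1 (\<lambda>x. g1 (\<lambda>t\<in>A. family t x)) N2 (\<lambda>x. g2 (\<lambda>t\<in>B. family t x))"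
proof -
  have "indep_vars (\<lambda>_. count_space UNIV) family family_index"
    using indep unfolding family_def family_index_def .
  from indep_var_compose[OF indep_var_restrict[OF this assms(1-3)] assms(4,5)]
  show ?thesis by (simp add: comp_def)
qed

lemma measurable_block_sum:
  assumes "finite L" "Some ` Inl ` L \<subseteq> A"
  shows "(\<lambda>r. \<Sum>l\<in>L. projl (r (Some (Inl l))) :: int ^ 'd)
           \<in> measurable (PiM A (\<lambda>_. count_space (UNIV :: (int ^ 'd + nat) set))) (count_space UNIV)"
  by (rule measurable_count_space_sum)
     (use assms in \<open>auto intro!: measurable_PiM_component_count_space\<close>)

lemma Wi_add_Y: "Wi i x + Y i x = W x" and Y_add_Wi: "Y i x + Wi i x = W x"
  by (simp_all add: Wi_def)

lemma Wi_eq_sum: "i \<in> {1..m} \<Longrightarrow> Wi i x = (\<Sum>l\<in>{1..m} - {i}. Y l x)"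
  by (simp add: Wi_def W_def sum_diff1)

lemma measurable_W: "W \<in> measurable M (count_space UNIV)"
  unfolding W_def by (rule measurable_count_space_sum) (auto intro: Y_meas)

lemma measurable_Wi: "i \<in> {1..m} \<Longrightarrow> Wi i \<in> measurable M (count_space UNIV)"
  unfolding Wi_def by (rule measurable_count_space_binop[OF measurable_W Y_meas])

lemma measurable_jump: "i \<in> {1..m} \<Longrightarrow> (\<lambda>x. Y' i x - Y i x) \<in> measurable M (count_space UNIV)"
  by (rule measurable_count_space_binop[OF Y'_meas Y_meas])

lemma measurable_xi: "xi \<in> measurable M (count_space UNIV)"
proof (unfold xi_def, rule measurable_compose_countable'[where I="{1..m}" and g=K])
  show "K \<in> measurable M (count_space {1..m})"
    using K_meas K_range by (auto simp: measurable_count_space_eq2_countable)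
qed (auto intro: measurable_jump)

text \<open>The second variable is padded with \<open>0\<close> because \<open>indep_var\<close> needs both
  variables to take values in the same type.\<close>

lemma indep_Y_pair_Wi:
  assumes i: "i \<in> {1..m}"
  shows "indep_var (count_space UNIV) (\<lambda>x. (Y i x, Y' i x)) (count_space UNIV) (\<lambda>x. (Wi i x, 0))"
proof -
  let ?A = "{Some (Inl i), Some (Inr i)}" and ?B = "Some ` Inl ` ({1..m} - {i})"
  have "indep_var (count_space UNIV)
      (\<lambda>x. (\<lambda>r. (projl (r (Some (Inl i))) :: int ^ 'd, projl (r (Some (Inr i))) :: int ^ 'd))
              (\<lambda>t\<in>?A. family t x))
      (count_space UNIV)
      (\<lambda>x. (\<lambda>r. (\<Sum>l\<in>{1..m} - {i}. projl (r (Some (Inl l))) :: int ^ 'd, 0 :: int ^ 'd))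
              (\<lambda>t\<in>?B. family t x))"
  proof (rule indep_var_family_blocks)
    show "?A \<inter> ?B = {}" "?A \<subseteq> family_index" "?B \<subseteq> family_index"
      using i by (auto simp: family_index_def)
    show "(\<lambda>r. (projl (r (Some (Inl i))) :: int ^ 'd, projl (r (Some (Inr i))) :: int ^ 'd))
        \<in> measurable (PiM ?A (\<lambda>_. count_space (UNIV :: (int ^ 'd + nat) set))) (count_space UNIV)"
      by (intro measurable_count_space_binop[where h=Pair] measurable_PiM_component_count_space) auto
    show "(\<lambda>r. (\<Sum>l\<in>{1..m} - {i}. projl (r (Some (Inl l))) :: int ^ 'd, 0 :: int ^ 'd))
        \<in> measurable (PiM ?B (\<lambda>_. count_space (UNIV :: (int ^ 'd + nat) set))) (count_space UNIV)"
      by (rule measurable_count_space_compose[OF measurable_block_sum, where h="\<lambda>s. (s, 0)"]) auto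
  qed
  then show ?thesis using i by (simp add: Wi_eq_sum)
qed

lemma indep_Y_Y':
  assumes i: "i \<in> {1..m}"
  shows "indep_var (count_space UNIV) (Y i) (count_space UNIV) (Y' i)"
proof -
  have "indep_var (count_space UNIV) (\<lambda>x. (\<lambda>r. projl (r (Some (Inl i))) :: int ^ 'd) (\<lambda>t\<in>{Some (Inl i)}. family t x))
      (count_space UNIV) (\<lambda>x. (\<lambda>r. projl (r (Some (Inr i))) :: int ^ 'd) (\<lambda>t\<in>{Some (Inr i)}. family t x))"
    using i by (intro indep_var_family_blocks)
      (auto simp: family_index_def intro!: measurable_PiM_component_count_space)
  then show ?thesis by (simp add: fun_eq_iff)
qed

lemma indep_Y_Wi:
  assumes i: "i \<in> {1..m}"
  shows "indep_var (count_space UNIV) (Y i) (count_space UNIV) (Wi i)"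
proof -
  let ?B = "Some ` Inl ` ({1..m} - {i})"
  have "indep_var (count_space UNIV) (\<lambda>x. (\<lambda>r. projl (r (Some (Inl i))) :: int ^ 'd) (\<lambda>t\<in>{Some (Inl i)}. family t x))
      (count_space UNIV) (\<lambda>x. (\<lambda>r. \<Sum>l\<in>{1..m} - {i}. projl (r (Some (Inl l))) :: int ^ 'd) (\<lambda>t\<in>?B. family t x))"
    using i by (intro indep_var_family_blocks)
      (auto simp: family_index_def
        intro!: measurable_PiM_component_count_space measurable_block_sum)
  moreover have "Wi i = (\<lambda>x. \<Sum>l\<in>{1..m} - {i}. Y l x)" using i by (simp add: fun_eq_iff Wi_eq_sum)
  ultimately show ?thesis using i by (simp cong: restrict_cong)
qed

lemma indep_index_summands:
  fixes \<psi> :: "int ^ 'd \<Rightarrow> int ^ 'd \<Rightarrow> int ^ 'd \<Rightarrow> real"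
  assumes i: "i \<in> {1..m}"
  shows "indep_var borel (\<lambda>x. if K x = i then 1 else 0 :: real) borel (\<lambda>x. \<psi> (W x) (Y i x) (Y' i x))"
proof -
  let ?B = "Some ` Inl ` {1..m} \<union> Some ` Inr ` {1..m}"
  have "(\<lambda>r. ((\<Sum>l\<in>{1..m}. projl (r (Some (Inl l))) :: int ^ 'd),
              projl (r (Some (Inl i))) :: int ^ 'd, projl (r (Some (Inr i))) :: int ^ 'd))
        \<in> measurable (PiM ?B (\<lambda>_. count_space (UNIV :: (int ^ 'd + nat) set))) (count_space UNIV)"
    using i by (intro measurable_count_space_binop[where h=Pair] measurable_block_sum)
      (auto intro!: measurable_PiM_component_count_space)
  from measurable_count_space_compose[OF this, of "\<lambda>(a, b, c). \<psi> a b c" borel]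
  have "indep_var borel (\<lambda>x. (\<lambda>r. if projr (r None) = i then 1 else 0 :: real) (\<lambda>t\<in>{None}. family t x))
      borel (\<lambda>x. (\<lambda>r. \<psi> (\<Sum>l\<in>{1..m}. projl (r (Some (Inl l)))) (projl (r (Some (Inl i))))
                        (projl (r (Some (Inr i))))) (\<lambda>t\<in>?B. family t x))"
    using i by (intro indep_var_family_blocks)
      (auto simp: family_index_def intro!: measurable_PiM_component_count_space)
  then show ?thesis using i by (simp add: fun_eq_iff W_def)
qed

lemma indep_W_Y':
  fixes h1 h2 :: "int ^ 'd \<Rightarrow> real"
  assumes i: "i \<in> {1..m}"
  shows "indep_var borel (\<lambda>x. h1 (W x)) borel (\<lambda>x. h2 (Y' i x))"
proof -
  let ?A = "Some ` Inl ` {1..m}"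
  have "(\<lambda>r. \<Sum>l\<in>{1..m}. projl (r (Some (Inl l))) :: int ^ 'd)
          \<in> measurable (PiM ?A (\<lambda>_. count_space (UNIV :: (int ^ 'd + nat) set))) (count_space UNIV)"
    by (rule measurable_block_sum) auto
  from measurable_count_space_compose[OF this, of h1 borel]
  have "indep_var borel (\<lambda>x. (\<lambda>r. h1 (\<Sum>l\<in>{1..m}. projl (r (Some (Inl l))))) (\<lambda>t\<in>?A. family t x))
      borel (\<lambda>x. (\<lambda>r. h2 (projl (r (Some (Inr i))))) (\<lambda>t\<in>{Some (Inr i)}. family t x))"
    using i by (intro indep_var_family_blocks)
      (auto simp: family_index_def intro!: measurable_PiM_component_count_space)
  then show ?thesis using i by (simp add: fun_eq_iff W_def)
qed

lemma
  assumes "i \<in> {1..m}"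
  shows integrable_Y'_iff: "integrable M (\<lambda>x. f (Y' i x)) \<longleftrightarrow> integrable M (\<lambda>x. (f (Y i x) :: real))"
    and integral_Y'_eq: "(\<integral>x. f (Y' i x) \<partial>M) = (\<integral>x. (f (Y i x) :: real) \<partial>M)"
  by (rule integrable_comp_eq_of_distr_eq integral_comp_eq_of_distr_eq,
      (rule Y_meas Y'_meas copy, fact assms)+)+

lemma index_indicator_eq:
  "x \<in> space M \<Longrightarrow> (if K x = i then 1 else 0 :: real) = indicator {x \<in> space M. K x = i} x"
  by (simp add: indicator_def)

lemma level_set_K_in_sets: "{x \<in> space M. K x = i} \<in> sets M"
  using measurable_sets[OF K_meas, of "{i}"] by (simp add: vimage_def Int_def conj_commute)

lemma integrable_index_indicator: "integrable M (\<lambda>x. if K x = i then 1 else 0 :: real)"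
  using level_set_K_in_sets
  by (subst Bochner_Integration.integrable_cong[OF refl index_indicator_eq])
     (auto simp: emeasure_eq_measure intro: integrable_real_indicator)

lemma integral_index_indicator:
  "i \<in> {1..m} \<Longrightarrow> (\<integral>x. (if K x = i then 1 else 0 :: real) \<partial>M) = 1 / real m"
  using level_set_K_in_sets K_unif
  by (subst Bochner_Integration.integral_cong[OF refl index_indicator_eq]) auto

lemma
  fixes \<psi> :: "nat \<Rightarrow> int ^ 'd \<Rightarrow> int ^ 'd \<Rightarrow> int ^ 'd \<Rightarrow> real"
  assumes int: "\<And>i. i \<in> {1..m} \<Longrightarrow> integrable M (\<lambda>x. \<psi> i (W x) (Y i x) (Y' i x))"
  shows integrable_resampled: "integrable M (\<lambda>x. \<psi> (K x) (W x) (Y (K x) x) (Y' (K x) x))"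
    and integral_resampled: "(\<integral>x. \<psi> (K x) (W x) (Y (K x) x) (Y' (K x) x) \<partial>M)
           = (\<Sum>i\<in>{1..m}. \<integral>x. \<psi> i (W x) (Y i x) (Y' i x) \<partial>M) / real m"
proof -
  define T where "T i x = (if K x = i then 1 else 0 :: real) * \<psi> i (W x) (Y i x) (Y' i x)" for i x
  have eq: "\<psi> (K x) (W x) (Y (K x) x) (Y' (K x) x) = (\<Sum>i\<in>{1..m}. T i x)" if x: "x \<in> space M" for x
  proof -
    have "(\<Sum>i\<in>{1..m}. T i x) = (\<Sum>i\<in>{1..m}. if K x = i then \<psi> i (W x) (Y i x) (Y' i x) else 0)"
      unfolding T_def by (intro sum.cong) auto
    then show ?thesis using K_range[OF x] by (simp add: sum.delta)
  qed
  have T: "integrable M (T i)" "integral\<^sup>L M (T i) = (\<integral>x. \<psi> i (W x) (Y i x) (Y' i x) \<partial>M) / real m"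
    if i: "i \<in> {1..m}" for i
    unfolding T_def
    using indep_var_integrable[OF indep_index_summands[OF i] integrable_index_indicator int[OF i]]
      indep_var_lebesgue_integral[OF indep_index_summands[OF i] integrable_index_indicator int[OF i]]
      integral_index_indicator[OF i]
    by simp_all
  have "integrable M (\<lambda>x. \<psi> (K x) (W x) (Y (K x) x) (Y' (K x) x))
      \<longleftrightarrow> integrable M (\<lambda>x. \<Sum>i\<in>{1..m}. T i x)"
    by (rule Bochner_Integration.integrable_cong) (simp_all add: eq)
  with T show "integrable M (\<lambda>x. \<psi> (K x) (W x) (Y (K x) x) (Y' (K x) x))" by auto
  have "(\<integral>x. \<psi> (K x) (W x) (Y (K x) x) (Y' (K x) x) \<partial>M) = (\<integral>x. (\<Sum>i\<in>{1..m}. T i x) \<partial>M)"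
    by (intro Bochner_Integration.integral_cong) (auto simp: eq)
  also have "\<dots> = (\<Sum>i\<in>{1..m}. \<integral>x. \<psi> i (W x) (Y i x) (Y' i x) \<partial>M) / real m"
    using T by (simp add: Bochner_Integration.integral_sum sum_divide_distrib)
  finally show "(\<integral>x. \<psi> (K x) (W x) (Y (K x) x) (Y' (K x) x) \<partial>M)
      = (\<Sum>i\<in>{1..m}. \<integral>x. \<psi> i (W x) (Y i x) (Y' i x) \<partial>M) / real m" .
qed

lemma integrable_norm1_Y_cube: "i \<in> {1..m} \<Longrightarrow> integrable M (\<lambda>x. norm1 (Y i x) ^ 3)"
proof (rule Bochner_Integration.integrable_bound)
  assume i: "i \<in> {1..m}"
  show "integrable M (\<lambda>x. real CARD('d) powr (3/2) * norm (rvec (Y i x)) ^ 3)"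
    using third_moments[OF i] by simp
  show "(\<lambda>x. norm1 (Y i x) ^ 3) \<in> borel_measurable M"
    by (rule measurable_count_space_compose[OF Y_meas[OF i]]) simp
  show "AE x in M. norm (norm1 (Y i x) ^ 3) \<le> norm (real CARD('d) powr (3/2) * norm (rvec (Y i x)) ^ 3)"
    by (intro AE_I2) (simp add: norm1_rvec sum_abs_cube_le_card_powr_mult_norm_cube)
qed

lemma integrable_norm1_Y'_cube: "i \<in> {1..m} \<Longrightarrow> integrable M (\<lambda>x. norm1 (Y' i x) ^ 3)"
  using integrable_norm1_Y_cube integrable_Y'_iff[of i "\<lambda>u. norm1 u ^ 3"] by simp

lemma integrable_cubically_bounded_Y'_shift:
  assumes i: "i \<in> {1..m}" and h: "cubically_bounded h"
  shows "integrable M (\<lambda>x. h (Y' i x - y))"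
proof (rule integrable_cubically_bounded[OF _ _ h])
  show "(\<lambda>x. Y' i x - y) \<in> measurable M (count_space UNIV)"
    by (rule measurable_count_space_binop[OF Y'_meas[OF i] measurable_const]) simp
  show "integrable M (\<lambda>x. norm1 (Y' i x - y) ^ 3)"
    by (rule integrable_norm1_diff_cube[OF Y'_meas[OF i] measurable_const integrable_norm1_Y'_cube[OF i]]) simp_all
qed

lemma integrable_cubically_bounded_jump:
  assumes i: "i \<in> {1..m}" and h: "cubically_bounded h"
  shows "integrable M (\<lambda>x. h (Y' i x - Y i x))"
  by (rule integrable_cubically_bounded[OF measurable_jump[OF i] integrable_norm1_diff_cube h])
     (use i in \<open>auto intro: Y_meas Y'_meas integrable_norm1_Y_cube integrable_norm1_Y'_cube\<close>)

lemma
  assumes h: "cubically_bounded h"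
  shows integrable_cubically_bounded_xi: "integrable M (\<lambda>x. h (xi x))"
    and integral_cubically_bounded_xi:
      "(\<integral>x. h (xi x) \<partial>M) = (\<Sum>i\<in>{1..m}. \<integral>x. h (Y' i x - Y i x) \<partial>M) / real m"
  using integrable_resampled[of "\<lambda>i w y y'. h (y' - y)"] integral_resampled[of "\<lambda>i w y y'. h (y' - y)"]
    integrable_cubically_bounded_jump[OF _ h]
  by (simp_all add: xi_def)

lemma integral_norm1_xi_cube_le:
  "(\<integral>x. norm1 (xi x) ^ 3 \<partial>M) \<le> real CARD('d) powr (3/2) * (\<integral>x. norm (rvec (xi x)) ^ 3 \<partial>M)"
proof -
  have xi3: "integrable M (\<lambda>x. norm1 (xi x) ^ 3)"
    by (rule integrable_cubically_bounded_xi[OF cubically_bounded_norm1_cube])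
  have le: "norm (rvec (xi x)) ^ 3 \<le> norm1 (xi x) ^ 3" for x
    unfolding norm1_rvec by (intro power_mono norm_le_l1_cart) simp
  have "integrable M (\<lambda>x. norm (rvec (xi x)) ^ 3)"
  proof (rule Bochner_Integration.integrable_bound[OF xi3])
    show "(\<lambda>x. norm (rvec (xi x)) ^ 3) \<in> borel_measurable M"
      by (rule measurable_count_space_compose[OF measurable_xi]) simp
  qed (use le in simp)
  then have "(\<integral>x. norm1 (xi x) ^ 3 \<partial>M) \<le> (\<integral>x. real CARD('d) powr (3/2) * norm (rvec (xi x)) ^ 3 \<partial>M)"
    by (intro integral_mono[OF xi3])
       (simp_all add: norm1_rvec sum_abs_cube_le_card_powr_mult_norm_cube)
  then show ?thesis by simp
qed

definition tv_eps :: real where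
  "tv_eps = Max ((\<lambda>(i, j). tv_dist (distr M (count_space UNIV) (Wi i))
                    (distr M (count_space UNIV) (\<lambda>x. Wi i x + unitv j))) ` ({1..m} \<times> UNIV))"

lemma tv_dist_le_tv_eps:
  "i \<in> {1..m} \<Longrightarrow>
    tv_dist (distr M (count_space UNIV) (Wi i)) (distr M (count_space UNIV) (\<lambda>x. Wi i x + unitv j)) \<le> tv_eps"
  unfolding tv_eps_def by (rule Max_ge) auto

lemma measurable_Wi_add_unitv:
  "i \<in> {1..m} \<Longrightarrow> (\<lambda>x. Wi i x + unitv j) \<in> measurable M (count_space UNIV)"
  by (rule measurable_count_space_binop[OF measurable_Wi measurable_const]) simp_all

lemma tv_eps_nonneg: "0 \<le> tv_eps"
proof -
  have i: "1 \<in> {1..m}" using m_pos by simp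
  let ?P = "distr M (count_space UNIV) (Wi 1)"
  let ?Q = "distr M (count_space UNIV) (\<lambda>x. Wi 1 x + unitv (undefined :: 'd))"
  have "\<bar>measure ?P {} - measure ?Q {}\<bar> \<le> tv_dist ?P ?Q"
    by (rule measure_diff_le_tv_dist[OF prob_space_distr[OF measurable_Wi[OF i]]
          prob_space_distr[OF measurable_Wi_add_unitv[OF i]]]) simp
  also have "\<dots> \<le> tv_eps" by (rule tv_dist_le_tv_eps[OF i])
  finally show ?thesis by simp
qed

definition shift_mean :: "(int ^ 'd \<Rightarrow> real) \<Rightarrow> nat \<Rightarrow> int ^ 'd \<Rightarrow> real" where
  "shift_mean \<phi> i y = (\<integral>x. \<phi> (Wi i x + y) \<partial>M)"

definition jump_mean :: "(int ^ 'd \<Rightarrow> real) \<Rightarrow> nat \<Rightarrow> int ^ 'd \<Rightarrow> real" where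
  "jump_mean G i y = (\<integral>x. G (Y' i x - y) \<partial>M)"

definition cov_W_jump :: "(int ^ 'd \<Rightarrow> real) \<Rightarrow> nat \<Rightarrow> (int ^ 'd \<Rightarrow> real) \<Rightarrow> real" where
  "cov_W_jump \<phi> i G = (\<integral>x. \<phi> (W x) * G (Y' i x - Y i x) \<partial>M)
     - (\<integral>x. \<phi> (W x) \<partial>M) * (\<integral>x. G (Y' i x - Y i x) \<partial>M)"

lemma abs_shift_mean_le_1:
  assumes i: "i \<in> {1..m}" and \<phi>: "\<And>w. \<phi> w \<in> {-1,0,1}"
  shows "\<bar>shift_mean \<phi> i y\<bar> \<le> 1"
  unfolding shift_mean_def
  by (rule abs_integral_sign_valued_le_1[where \<psi>="\<lambda>w. \<phi> (w + y)", OF measurable_Wi[OF i] \<phi>])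

lemma shift_mean_lipschitz:
  assumes i: "i \<in> {1..m}" and \<phi>: "\<And>w. \<phi> w \<in> {-1,0,1}"
  shows "\<bar>shift_mean \<phi> i y - shift_mean \<phi> i z\<bar> \<le> 2 * tv_eps * norm1 (z - y)"
proof (rule norm1_lipschitz_of_unit_steps)
  fix v j
  have "\<bar>shift_mean \<phi> i v - shift_mean \<phi> i (v + unitv j)\<bar>
      = \<bar>(\<integral>x. \<phi> (Wi i x + v) \<partial>M) - (\<integral>x. \<phi> ((Wi i x + unitv j) + v) \<partial>M)\<bar>"
    by (simp add: shift_mean_def add_ac)
  also have "\<dots> \<le> 2 * tv_dist (distr M (count_space UNIV) (Wi i))
                           (distr M (count_space UNIV) (\<lambda>x. Wi i x + unitv j))"
    by (rule integral_sign_valued_diff_le_tv_dist[where \<psi>="\<lambda>w. \<phi> (w + v)",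
          OF measurable_Wi[OF i] measurable_Wi_add_unitv[OF i] \<phi>])
  also have "\<dots> \<le> 2 * tv_eps" using tv_dist_le_tv_eps[OF i] by simp
  finally show "\<bar>shift_mean \<phi> i v - shift_mean \<phi> i (v + unitv j)\<bar> \<le> 2 * tv_eps" .
qed

lemma
  assumes i: "i \<in> {1..m}" and G: "cubically_bounded G"
  shows integrable_jump_mean_Y: "integrable M (\<lambda>x. jump_mean G i (Y i x))"
    and integral_jump_mean_Y: "(\<integral>x. jump_mean G i (Y i x) \<partial>M) = (\<integral>x. G (Y' i x - Y i x) \<partial>M)"
  using integrable_indep_var_iterated[OF indep_Y_Y'[OF i], where f="\<lambda>y y'. G (y' - y)",
      OF integrable_cubically_bounded_jump[OF i G]]
    integral_indep_var_iterated[OF indep_Y_Y'[OF i], where f="\<lambda>y y'. G (y' - y)",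
      OF integrable_cubically_bounded_jump[OF i G]]
  by (simp_all add: jump_mean_def)

lemma integral_sign_W:
  assumes i: "i \<in> {1..m}" and \<phi>: "\<And>w. \<phi> w \<in> {-1,0,1}"
  shows "(\<integral>x. \<phi> (W x) \<partial>M) = (\<integral>x. shift_mean \<phi> i (Y i x) \<partial>M)"
proof -
  have "integrable M (\<lambda>x. \<phi> (Wi i x + Y i x))"
    by (rule integrable_sign_valued[OF measurable_count_space_binop[OF measurable_Wi[OF i] Y_meas[OF i]] \<phi>])
  from integral_indep_var_iterated[OF indep_Y_Wi[OF i], where f="\<lambda>y v. \<phi> (v + y)", OF this]
  show ?thesis by (simp add: Wi_add_Y shift_mean_def)
qed

lemma integral_sign_W_mult_jump:
  assumes i: "i \<in> {1..m}" and \<phi>: "\<And>w. \<phi> w \<in> {-1,0,1}" and G: "cubically_bounded G"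
  shows "(\<integral>x. \<phi> (W x) * G (Y' i x - Y i x) \<partial>M) = (\<integral>x. shift_mean \<phi> i (Y i x) * jump_mean G i (Y i x) \<partial>M)"
proof -
  have intG: "integrable M (\<lambda>x. G (Y' i x - Y i x))"
    by (rule integrable_cubically_bounded_jump[OF i G])
  have \<phi>1: "\<bar>\<phi> w\<bar> \<le> 1" for w using \<phi>[of w] by auto
  have "(\<integral>x. \<phi> (W x) * G (Y' i x - Y i x) \<partial>M) = (\<integral>x. shift_mean \<phi> i (Y i x) * G (Y' i x - Y i x) \<partial>M)"
  proof -
    let ?f = "\<lambda>(p :: (int ^ 'd) \<times> (int ^ 'd)) (q :: (int ^ 'd) \<times> (int ^ 'd)). \<phi> (fst q + fst p) * G (snd p - fst p)"
    have "(\<lambda>x. \<phi> (W x)) \<in> borel_measurable M"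
      by (rule measurable_count_space_compose[OF measurable_W]) simp
    then have "integrable M (\<lambda>x. ?f (Y i x, Y' i x) (Wi i x, 0))"
      using integrable_bounded_mult[OF intG _ \<phi>1] by (simp add: Wi_add_Y)
    from integral_indep_var_iterated[OF indep_Y_pair_Wi[OF i] this]
    show ?thesis by (simp add: Y_add_Wi shift_mean_def add.commute)
  qed
  also have "\<dots> = (\<integral>x. shift_mean \<phi> i (Y i x) * jump_mean G i (Y i x) \<partial>M)"
  proof -
    have "(\<lambda>x. shift_mean \<phi> i (Y i x)) \<in> borel_measurable M"
      by (rule measurable_count_space_compose[OF Y_meas[OF i]]) simp
    from integrable_bounded_mult[OF intG this abs_shift_mean_le_1[OF i \<phi>]]
    show ?thesis
      using integral_indep_var_iterated[OF indep_Y_Y'[OF i],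
          where f="\<lambda>y y'. shift_mean \<phi> i y * G (y' - y)"]
      by (simp add: jump_mean_def)
  qed
  finally show ?thesis .
qed

lemma
  assumes i: "i \<in> {1..m}" and \<phi>: "\<And>w. \<phi> w \<in> {-1,0,1}" and G: "cubically_bounded G"
  shows integrable_shift_jump_product:
      "integrable M (\<lambda>x. (shift_mean \<phi> i (Y i x) - shift_mean \<phi> i (Y' i x))
                         * (jump_mean G i (Y i x) - jump_mean G i (Y' i x)))"
    and cov_W_jump_eq_shift_jump_product:
      "cov_W_jump \<phi> i G = (\<integral>x. (shift_mean \<phi> i (Y i x) - shift_mean \<phi> i (Y' i x))
                                 * (jump_mean G i (Y i x) - jump_mean G i (Y' i x)) \<partial>M) / 2"
proof -
  note A1 = abs_shift_mean_le_1[OF i \<phi>]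
  note exchangeable = indep_Y_Y'[OF i] copy[OF i] A1 integrable_jump_mean_Y[OF i G]
  show "integrable M (\<lambda>x. (shift_mean \<phi> i (Y i x) - shift_mean \<phi> i (Y' i x))
      * (jump_mean G i (Y i x) - jump_mean G i (Y' i x)))"
    by (rule integrable_exchangeable_product[where A="shift_mean \<phi> i", OF exchangeable])
  show "cov_W_jump \<phi> i G = (\<integral>x. (shift_mean \<phi> i (Y i x) - shift_mean \<phi> i (Y' i x))
      * (jump_mean G i (Y i x) - jump_mean G i (Y' i x)) \<partial>M) / 2"
    using integral_exchangeable_product[where A="shift_mean \<phi> i", OF exchangeable]
    unfolding cov_W_jump_def integral_sign_W_mult_jump[where \<phi>=\<phi>, OF i \<phi> G]
      integral_sign_W[where \<phi>=\<phi>, OF i \<phi>]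
      integral_jump_mean_Y[OF i G, symmetric]
    by simp
qed

lemma sum_abs_jump_mean_coord_prod_diff_le:
  assumes i: "i \<in> {1..m}"
  shows "(\<Sum>j\<in>UNIV. \<Sum>k\<in>UNIV. \<bar>jump_mean (coord_prod j k) i y - jump_mean (coord_prod j k) i z\<bar>)
     \<le> norm1 (z - y) * (jump_mean norm1 i y + jump_mean norm1 i z)"
proof -
  let ?d = "\<lambda>j k x. \<bar>coord_prod j k (Y' i x - y) - coord_prod j k (Y' i x - z)\<bar>"
  have ig: "integrable M (\<lambda>x. coord_prod j k (Y' i x - v))" for j k v
    by (rule integrable_cubically_bounded_Y'_shift[OF i cubically_bounded_coord_prod])
  have il: "integrable M (\<lambda>x. norm1 (Y' i x - v))" for v
    by (rule integrable_cubically_bounded_Y'_shift[OF i cubically_bounded_norm1])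
  have igd: "integrable M (?d j k)" for j k
    using ig by auto
  have "(\<Sum>j\<in>UNIV. \<Sum>k\<in>UNIV. \<bar>jump_mean (coord_prod j k) i y - jump_mean (coord_prod j k) i z\<bar>)
      \<le> (\<Sum>j\<in>UNIV. \<Sum>k\<in>UNIV. (\<integral>x. ?d j k x \<partial>M))"
  proof (intro sum_mono)
    fix j k
    have "jump_mean (coord_prod j k) i y - jump_mean (coord_prod j k) i z
        = (\<integral>x. coord_prod j k (Y' i x - y) - coord_prod j k (Y' i x - z) \<partial>M)"
      using ig by (simp add: jump_mean_def)
    then show "\<bar>jump_mean (coord_prod j k) i y - jump_mean (coord_prod j k) i z\<bar> \<le> (\<integral>x. ?d j k x \<partial>M)"
      by simp
  qed
  also have "\<dots> = (\<integral>x. (\<Sum>j\<in>UNIV. \<Sum>k\<in>UNIV. ?d j k x) \<partial>M)"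
    using igd by (simp add: Bochner_Integration.integral_sum Bochner_Integration.integrable_sum)
  also have "\<dots> \<le> (\<integral>x. norm1 (z - y) * (norm1 (Y' i x - y) + norm1 (Y' i x - z)) \<partial>M)"
  proof (rule integral_mono)
    show "integrable M (\<lambda>x. \<Sum>j\<in>UNIV. \<Sum>k\<in>UNIV. ?d j k x)"
      using igd by (simp add: Bochner_Integration.integrable_sum)
    show "integrable M (\<lambda>x. norm1 (z - y) * (norm1 (Y' i x - y) + norm1 (Y' i x - z)))"
      using il by simp
    fix x
    show "(\<Sum>j\<in>UNIV. \<Sum>k\<in>UNIV. ?d j k x) \<le> norm1 (z - y) * (norm1 (Y' i x - y) + norm1 (Y' i x - z))"
      using sum_abs_coord_prod_diff_le[of "Y' i x - y" "Y' i x - z"] by simp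
  qed
  also have "\<dots> = norm1 (z - y) * (jump_mean norm1 i y + jump_mean norm1 i z)"
    using il by (simp add: jump_mean_def)
  finally show ?thesis .
qed

lemma norm1_mult_sum_abs_jump_mean_diff_le:
  assumes i: "i \<in> {1..m}"
  shows "norm1 (z - y) * (\<Sum>j\<in>UNIV. \<Sum>k\<in>UNIV. \<bar>jump_mean (coord_prod j k) i y - jump_mean (coord_prod j k) i z\<bar>)
     \<le> 2 * norm1 (z - y) ^ 3 + jump_mean (\<lambda>u. norm1 u ^ 3) i y + jump_mean (\<lambda>u. norm1 u ^ 3) i z"
proof -
  define c where "c = norm1 (z - y)"
  define a where "a = (\<lambda>x. norm1 (Y' i x - y))"
  define b where "b = (\<lambda>x. norm1 (Y' i x - z))"
  have ia: "integrable M a" "integrable M (\<lambda>x. a x ^ 3)" and ib: "integrable M b" "integrable M (\<lambda>x. b x ^ 3)"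
    unfolding a_def b_def
    by (rule integrable_cubically_bounded_Y'_shift[OF i cubically_bounded_norm1]
             integrable_cubically_bounded_Y'_shift[OF i cubically_bounded_norm1_cube])+
  have c0: "0 \<le> c" by (simp add: c_def)
  have "c * (\<Sum>j\<in>UNIV. \<Sum>k\<in>UNIV. \<bar>jump_mean (coord_prod j k) i y - jump_mean (coord_prod j k) i z\<bar>)
      \<le> c * (c * (jump_mean norm1 i y + jump_mean norm1 i z))"
    unfolding c_def by (intro mult_left_mono sum_abs_jump_mean_coord_prod_diff_le[OF i]) simp
  also have "\<dots> = (\<integral>x. c * c * a x + c * c * b x \<partial>M)"
    using ia ib by (simp add: jump_mean_def a_def b_def algebra_simps)
  also have "\<dots> \<le> (\<integral>x. 2 * c ^ 3 + a x ^ 3 + b x ^ 3 \<partial>M)"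
  proof (rule integral_mono)
    show "integrable M (\<lambda>x. c * c * a x + c * c * b x)" "integrable M (\<lambda>x. 2 * c ^ 3 + a x ^ 3 + b x ^ 3)"
      using ia ib by simp_all
    fix x
    have "c * c * a x \<le> c ^ 3 + a x ^ 3" "c * c * b x \<le> c ^ 3 + b x ^ 3"
      using c0 by (auto intro!: sq_mult_le_cube_add simp: a_def b_def)
    then show "c * c * a x + c * c * b x \<le> 2 * c ^ 3 + a x ^ 3 + b x ^ 3" by simp
  qed
  also have "\<dots> = 2 * c ^ 3 + jump_mean (\<lambda>u. norm1 u ^ 3) i y + jump_mean (\<lambda>u. norm1 u ^ 3) i z"
    using ia ib by (simp add: jump_mean_def a_def b_def prob_space)
  finally show ?thesis unfolding c_def .
qed

lemma sum_abs_shift_jump_product_le: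
  assumes i: "i \<in> {1..m}" and \<phi>: "\<And>j k w. \<phi> j k w \<in> {-1,0,1}"
  shows "(\<Sum>j\<in>UNIV. \<Sum>k\<in>UNIV. \<bar>(shift_mean (\<phi> j k) i y - shift_mean (\<phi> j k) i z)
            * (jump_mean (coord_prod j k) i y - jump_mean (coord_prod j k) i z)\<bar>)
     \<le> 2 * tv_eps * (2 * norm1 (z - y) ^ 3 + jump_mean (\<lambda>u. norm1 u ^ 3) i y
                       + jump_mean (\<lambda>u. norm1 u ^ 3) i z)"
proof -
  let ?J = "\<lambda>j k. \<bar>jump_mean (coord_prod j k) i y - jump_mean (coord_prod j k) i z\<bar>"
  have "\<bar>(shift_mean (\<phi> j k) i y - shift_mean (\<phi> j k) i z)
          * (jump_mean (coord_prod j k) i y - jump_mean (coord_prod j k) i z)\<bar>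
      \<le> 2 * tv_eps * (norm1 (z - y) * ?J j k)" for j k
    unfolding abs_mult mult.assoc[symmetric]
    by (intro mult_right_mono shift_mean_lipschitz[where \<phi>="\<phi> j k", OF i \<phi>]) simp
  then have "(\<Sum>j\<in>UNIV. \<Sum>k\<in>UNIV. \<bar>(shift_mean (\<phi> j k) i y - shift_mean (\<phi> j k) i z)
            * (jump_mean (coord_prod j k) i y - jump_mean (coord_prod j k) i z)\<bar>)
      \<le> 2 * tv_eps * (norm1 (z - y) * (\<Sum>j\<in>UNIV. \<Sum>k\<in>UNIV. ?J j k))"
    by (simp add: sum_distrib_left sum_mono)
  also have "\<dots> \<le> 2 * tv_eps * (2 * norm1 (z - y) ^ 3 + jump_mean (\<lambda>u. norm1 u ^ 3) i y
                                  + jump_mean (\<lambda>u. norm1 u ^ 3) i z)"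
    using tv_eps_nonneg by (intro mult_left_mono norm1_mult_sum_abs_jump_mean_diff_le[OF i]) simp
  finally show ?thesis .
qed

lemma sum_abs_cov_W_jump_coord_prod_le:
  assumes i: "i \<in> {1..m}" and \<phi>: "\<And>j k w. \<phi> j k w \<in> {-1,0,1}"
  shows "(\<Sum>j\<in>UNIV. \<Sum>k\<in>UNIV. \<bar>cov_W_jump (\<phi> j k) i (coord_prod j k)\<bar>)
     \<le> 4 * tv_eps * (\<integral>x. norm1 (Y' i x - Y i x) ^ 3 \<partial>M)"
proof -
  define D where "D j k x = (shift_mean (\<phi> j k) i (Y i x) - shift_mean (\<phi> j k) i (Y' i x))
      * (jump_mean (coord_prod j k) i (Y i x) - jump_mean (coord_prod j k) i (Y' i x))" for j k x
  define Q where "Q = jump_mean (\<lambda>u. norm1 u ^ 3) i"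
  have D: "integrable M (D j k)" "cov_W_jump (\<phi> j k) i (coord_prod j k) = integral\<^sup>L M (D j k) / 2" for j k
    unfolding D_def
    by (rule integrable_shift_jump_product[where \<phi>="\<phi> j k", OF i \<phi> cubically_bounded_coord_prod]
             cov_W_jump_eq_shift_jump_product[where \<phi>="\<phi> j k", OF i \<phi> cubically_bounded_coord_prod])+
  have c3: "integrable M (\<lambda>x. norm1 (Y' i x - Y i x) ^ 3)"
    by (rule integrable_cubically_bounded_jump[OF i cubically_bounded_norm1_cube])
  have QY: "integrable M (\<lambda>x. Q (Y i x))" "(\<integral>x. Q (Y i x) \<partial>M) = (\<integral>x. norm1 (Y' i x - Y i x) ^ 3 \<partial>M)"
    unfolding Q_def
    by (rule integrable_jump_mean_Y[OF i cubically_bounded_norm1_cube]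
             integral_jump_mean_Y[OF i cubically_bounded_norm1_cube])+
  have QY': "integrable M (\<lambda>x. Q (Y' i x))" "(\<integral>x. Q (Y' i x) \<partial>M) = (\<integral>x. Q (Y i x) \<partial>M)"
    using QY(1) integrable_Y'_iff[OF i, of Q] integral_Y'_eq[OF i, of Q] by simp_all
  have "(\<Sum>j\<in>UNIV. \<Sum>k\<in>UNIV. \<bar>cov_W_jump (\<phi> j k) i (coord_prod j k)\<bar>)
      \<le> (\<Sum>j\<in>UNIV. \<Sum>k\<in>UNIV. (\<integral>x. \<bar>D j k x\<bar> / 2 \<partial>M))"
    using integral_abs_bound[of M "D _ _"] by (intro sum_mono) (simp add: D(2))
  also have "\<dots> = (\<integral>x. (\<Sum>j\<in>UNIV. \<Sum>k\<in>UNIV. \<bar>D j k x\<bar>) / 2 \<partial>M)"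
    using D(1) by (simp add: Bochner_Integration.integral_sum Bochner_Integration.integrable_sum
        sum_divide_distrib)
  also have "\<dots> \<le> (\<integral>x. tv_eps * (2 * norm1 (Y' i x - Y i x) ^ 3 + Q (Y i x) + Q (Y' i x)) \<partial>M)"
  proof (rule integral_mono)
    fix x
    show "(\<Sum>j\<in>UNIV. \<Sum>k\<in>UNIV. \<bar>D j k x\<bar>) / 2 \<le> tv_eps * (2 * norm1 (Y' i x - Y i x) ^ 3 + Q (Y i x) + Q (Y' i x))"
      using sum_abs_shift_jump_product_le[where \<phi>=\<phi> and y="Y i x" and z="Y' i x", OF i \<phi>]
      unfolding D_def Q_def by linarith
  qed (use D(1) c3 QY QY' in \<open>simp_all add: Bochner_Integration.integrable_sum\<close>)
  also have "\<dots> = 4 * tv_eps * (\<integral>x. norm1 (Y' i x - Y i x) ^ 3 \<partial>M)"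
    using c3 QY QY' by simp
  finally show ?thesis .
qed

definition W_algebra :: "'a measure" where
  "W_algebra = vimage_algebra (space M) W (count_space UNIV)"

lemma sets_W_algebra: "sets W_algebra = {W -` B \<inter> space M | B. True}"
  unfolding W_algebra_def by (simp add: sets_vimage_algebra2)

lemma space_W_algebra: "space W_algebra = space M"
  by (simp add: W_algebra_def)

lemma W_algebra_subalgebra: "finite_measure_subalgebra M W_algebra"
proof -
  have "subalgebra M W_algebra"
    unfolding subalgebra_def using measurable_sets[OF measurable_W]
    by (auto simp: sets_W_algebra space_W_algebra)
  then show ?thesis by unfold_locales
qed

lemma measurable_W_algebra: "(\<lambda>x. h (W x) :: real) \<in> borel_measurable W_algebra"
proof -
  have "W \<in> measurable W_algebra (count_space UNIV)"
    unfolding W_algebra_def by (rule measurable_vimage_algebra1) simp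
  then show ?thesis by (rule measurable_count_space_compose) simp
qed

lemma W_algebra_measurable_factor:
  fixes f :: "'a \<Rightarrow> real"
  assumes f: "f \<in> borel_measurable W_algebra"
  obtains \<psi> where "\<And>x. x \<in> space M \<Longrightarrow> f x = \<psi> (W x)"
proof -
  have key: "f x' = f x" if x: "x \<in> space M" and x': "x' \<in> space M" and eq: "W x' = W x" for x x'
  proof -
    have "f -` {f x} \<inter> space W_algebra \<in> sets W_algebra" using f by (rule measurable_sets) simp
    then obtain B where B: "f -` {f x} \<inter> space W_algebra = W -` B \<inter> space M"
      by (auto simp: sets_W_algebra)
    have "x \<in> f -` {f x} \<inter> space W_algebra" using x by (simp add: space_W_algebra)
    then have "W x \<in> B" using B by auto
    then have "x' \<in> f -` {f x} \<inter> space W_algebra" using B x' eq by auto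
    then show ?thesis by simp
  qed
  show ?thesis
  proof
    fix x assume x: "x \<in> space M"
    define x' where "x' = (SOME x'. x' \<in> space M \<and> W x' = W x)"
    have "x' \<in> space M \<and> W x' = W x"
      unfolding x'_def by (rule someI_ex) (use x in blast)
    then show "f x = (\<lambda>w. f (SOME x'. x' \<in> space M \<and> W x' = w)) (W x)"
      using key[OF x] by (simp add: x'_def)
  qed
qed

lemma integral_sign_mult_cond_exp_remainder:
  assumes \<phi>: "\<And>w. \<phi> w \<in> {-1,0,1}" and G: "cubically_bounded G"
  shows "(\<integral>x. \<phi> (W x) * (real_cond_exp M W_algebra (\<lambda>y. G (xi y)) x - (\<integral>y. G (xi y) \<partial>M)) \<partial>M)
     = (\<Sum>i\<in>{1..m}. cov_W_jump \<phi> i G) / real m"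
proof -
  interpret SF: finite_measure_subalgebra M W_algebra by (rule W_algebra_subalgebra)
  have iG: "integrable M (\<lambda>x. G (xi x))" by (rule integrable_cubically_bounded_xi[OF G])
  have \<phi>1: "\<bar>\<phi> w\<bar> \<le> 1" for w using \<phi>[of w] by auto
  have \<phi>M: "(\<lambda>x. \<phi> (W x)) \<in> borel_measurable M"
    by (rule measurable_count_space_compose[OF measurable_W]) simp
  have i\<phi>: "integrable M (\<lambda>x. \<phi> (W x))" by (rule integrable_sign_valued[OF measurable_W \<phi>])
  have i\<phi>G: "integrable M (\<lambda>x. \<phi> (W x) * G (xi x))" by (rule integrable_bounded_mult[OF iG \<phi>M \<phi>1])
  note ce = SF.real_cond_exp_intg[OF i\<phi>G measurable_W_algebra borel_measurable_integrable[OF iG]]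
  have split: "(\<integral>x. \<phi> (W x) * (real_cond_exp M W_algebra (\<lambda>y. G (xi y)) x - (\<integral>y. G (xi y) \<partial>M)) \<partial>M)
      = (\<integral>x. \<phi> (W x) * G (xi x) \<partial>M) - (\<integral>y. G (xi y) \<partial>M) * (\<integral>x. \<phi> (W x) \<partial>M)"
    using ce i\<phi> by (simp add: right_diff_distrib mult.commute)
  have E\<phi>G: "(\<integral>x. \<phi> (W x) * G (xi x) \<partial>M)
      = (\<Sum>i\<in>{1..m}. \<integral>x. \<phi> (W x) * G (Y' i x - Y i x) \<partial>M) / real m"
    using integral_resampled[of "\<lambda>i w y y'. \<phi> w * G (y' - y)"]
      integrable_bounded_mult[OF integrable_cubically_bounded_jump[OF _ G] \<phi>M \<phi>1]
    by (simp add: xi_def)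
  have "(\<Sum>i\<in>{1..m}. cov_W_jump \<phi> i G) = (\<Sum>i\<in>{1..m}. \<integral>x. \<phi> (W x) * G (Y' i x - Y i x) \<partial>M)
      - (\<integral>x. \<phi> (W x) \<partial>M) * (\<Sum>i\<in>{1..m}. \<integral>x. G (Y' i x - Y i x) \<partial>M)"
    by (simp add: cov_W_jump_def sum_subtractf sum_distrib_left)
  then show ?thesis
    by (subst split) (simp add: E\<phi>G integral_cubically_bounded_xi[OF G] diff_divide_distrib mult.commute)
qed

lemma integral_abs_cond_exp_remainder_eq:
  assumes G: "cubically_bounded G"
  obtains \<phi> where "\<And>w. \<phi> w \<in> {-1,0,1}"
    and "(\<integral>x. \<bar>real_cond_exp M W_algebra (\<lambda>y. G (xi y)) x - (\<integral>y. G (xi y) \<partial>M)\<bar> \<partial>M)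
           = (\<Sum>i\<in>{1..m}. cov_W_jump \<phi> i G) / real m"
proof -
  interpret SF: finite_measure_subalgebra M W_algebra by (rule W_algebra_subalgebra)
  define R where "R x = real_cond_exp M W_algebra (\<lambda>y. G (xi y)) x - (\<integral>y. G (xi y) \<partial>M)" for x
  have "R \<in> borel_measurable W_algebra" unfolding R_def by simp
  then obtain \<psi> where \<psi>: "\<And>x. x \<in> space M \<Longrightarrow> R x = \<psi> (W x)" by (rule W_algebra_measurable_factor) blast
  define \<phi> where "\<phi> w = sgn (\<psi> w)" for w
  have \<phi>: "\<phi> w \<in> {-1,0,1}" for w unfolding \<phi>_def by (simp add: sgn_if)
  have "(\<integral>x. \<bar>R x\<bar> \<partial>M) = (\<integral>x. \<phi> (W x) * R x \<partial>M)"
    by (rule Bochner_Integration.integral_cong[OF refl]) (simp add: \<phi>_def \<psi> abs_sgn)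
  also have "\<dots> = (\<Sum>i\<in>{1..m}. cov_W_jump \<phi> i G) / real m"
    unfolding R_def by (rule integral_sign_mult_cond_exp_remainder[where \<phi>=\<phi>, OF \<phi> G])
  finally show ?thesis using that \<phi> unfolding R_def by blast
qed

lemma integral_sum_abs_cond_exp_remainder_le:
  "(\<integral>x. (\<Sum>j\<in>UNIV. \<Sum>k\<in>UNIV. \<bar>real_cond_exp M W_algebra (\<lambda>y. coord_prod j k (xi y)) x
                                  - (\<integral>y. coord_prod j k (xi y) \<partial>M)\<bar>) \<partial>M)
     \<le> 4 * tv_eps * (\<integral>x. norm1 (xi x) ^ 3 \<partial>M)"
proof -
  interpret SF: finite_measure_subalgebra M W_algebra by (rule W_algebra_subalgebra)
  define R where "R j k x = real_cond_exp M W_algebra (\<lambda>y. coord_prod j k (xi y)) x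
      - (\<integral>y. coord_prod j k (xi y) \<partial>M)" for j k x
  let ?C = "\<lambda>\<phi> i j k. cov_W_jump (\<phi> j k) i (coord_prod j k)"
  have iR: "integrable M (R j k)" for j k
    unfolding R_def
    using SF.real_cond_exp_int(1)[OF integrable_cubically_bounded_xi[OF cubically_bounded_coord_prod]]
    by simp
  have "\<exists>\<phi>. (\<forall>w. \<phi> w \<in> {-1,0,1})
      \<and> (\<integral>x. \<bar>R j k x\<bar> \<partial>M) = (\<Sum>i\<in>{1..m}. cov_W_jump \<phi> i (coord_prod j k)) / real m" for j k
    using integral_abs_cond_exp_remainder_eq[OF cubically_bounded_coord_prod] unfolding R_def by metis
  then obtain \<phi> where \<phi>: "\<And>j k w. \<phi> j k w \<in> {-1,0,1}"
    and abs_R: "\<And>j k. (\<integral>x. \<bar>R j k x\<bar> \<partial>M) = (\<Sum>i\<in>{1..m}. ?C \<phi> i j k) / real m"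
    by metis
  have "(\<integral>x. (\<Sum>j\<in>UNIV. \<Sum>k\<in>UNIV. \<bar>R j k x\<bar>) \<partial>M) = (\<Sum>j\<in>UNIV. \<Sum>k\<in>UNIV. (\<integral>x. \<bar>R j k x\<bar> \<partial>M))"
    using iR by (simp add: Bochner_Integration.integral_sum Bochner_Integration.integrable_sum)
  also have "\<dots> = (\<Sum>i\<in>{1..m}. \<Sum>j\<in>UNIV. \<Sum>k\<in>UNIV. ?C \<phi> i j k) / real m"
  proof -
    have "(\<Sum>j\<in>UNIV. \<Sum>k\<in>UNIV. \<Sum>i\<in>{1..m}. ?C \<phi> i j k) = (\<Sum>j\<in>UNIV. \<Sum>i\<in>{1..m}. \<Sum>k\<in>UNIV. ?C \<phi> i j k)"
      by (rule sum.cong[OF refl], rule sum.swap)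
    also have "\<dots> = (\<Sum>i\<in>{1..m}. \<Sum>j\<in>UNIV. \<Sum>k\<in>UNIV. ?C \<phi> i j k)"
      by (rule sum.swap)
    finally show ?thesis unfolding abs_R by (simp add: sum_divide_distrib[symmetric])
  qed
  also have "\<dots> \<le> (\<Sum>i\<in>{1..m}. 4 * tv_eps * (\<integral>x. norm1 (Y' i x - Y i x) ^ 3 \<partial>M)) / real m"
  proof (intro divide_right_mono sum_mono)
    fix i assume i: "i \<in> {1..m}"
    have "(\<Sum>j\<in>UNIV. \<Sum>k\<in>UNIV. ?C \<phi> i j k) \<le> (\<Sum>j\<in>UNIV. \<Sum>k\<in>UNIV. \<bar>?C \<phi> i j k\<bar>)"
      by (intro sum_mono) simp
    also have "\<dots> \<le> 4 * tv_eps * (\<integral>x. norm1 (Y' i x - Y i x) ^ 3 \<partial>M)"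
      by (rule sum_abs_cov_W_jump_coord_prod_le[OF i \<phi>])
    finally show "(\<Sum>j\<in>UNIV. \<Sum>k\<in>UNIV. ?C \<phi> i j k) \<le> 4 * tv_eps * (\<integral>x. norm1 (Y' i x - Y i x) ^ 3 \<partial>M)" .
  qed simp
  also have "\<dots> = 4 * tv_eps * (\<integral>x. norm1 (xi x) ^ 3 \<partial>M)"
    unfolding integral_cubically_bounded_xi[OF cubically_bounded_norm1_cube]
    by (simp add: sum_distrib_left)
  finally show ?thesis unfolding R_def .
qed

lemma integrable_coord_Y: "i \<in> {1..m} \<Longrightarrow> integrable M (\<lambda>x. real_of_int (Y i x $ j))"
  by (rule integrable_cubically_bounded[OF Y_meas integrable_norm1_Y_cube cubically_bounded_coord])

lemma coord_W_eq_sum: "real_of_int (W x $ j) = (\<Sum>i\<in>{1..m}. real_of_int (Y i x $ j))"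
  by (simp add: W_def)

lemma integrable_coord_W: "integrable M (\<lambda>x. real_of_int (W x $ j))"
  unfolding coord_W_eq_sum by (rule Bochner_Integration.integrable_sum) (rule integrable_coord_Y)

lemma integral_indicator_W_mult_jump_coord:
  assumes i: "i \<in> {1..m}"
  shows "(\<integral>x. indicator B (W x) * real_of_int ((Y' i x - Y i x) $ j) \<partial>M)
     = (\<integral>x. indicator B (W x) \<partial>M) * (\<integral>x. real_of_int (Y i x $ j) \<partial>M)
       - (\<integral>x. indicator B (W x) * real_of_int (Y i x $ j) \<partial>M)"
proof -
  let ?b = "\<lambda>x. indicator B (W x) :: real"
  have bM: "?b \<in> borel_measurable M" by (rule measurable_count_space_compose[OF measurable_W]) simp
  have b1: "\<bar>?b x\<bar> \<le> 1" for x by (simp add: indicator_def)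
  note iY = integrable_coord_Y[OF i]
  have iY': "integrable M (\<lambda>x. real_of_int (Y' i x $ j))"
    using iY integrable_Y'_iff[OF i, of "\<lambda>u. real_of_int (u $ j)"] by simp
  have "(\<integral>x. ?b x * real_of_int (Y' i x $ j) \<partial>M) = (\<integral>x. ?b x \<partial>M) * (\<integral>x. real_of_int (Y' i x $ j) \<partial>M)"
    by (rule indep_var_lebesgue_integral[OF indep_W_Y'[OF i]])
       (use iY' in \<open>auto intro: integrable_const_bound[where B=1] bM\<close>)
  also have "(\<integral>x. real_of_int (Y' i x $ j) \<partial>M) = (\<integral>x. real_of_int (Y i x $ j) \<partial>M)"
    by (rule integral_Y'_eq[OF i])
  finally have Y'part: "(\<integral>x. ?b x * real_of_int (Y' i x $ j) \<partial>M)
      = (\<integral>x. ?b x \<partial>M) * (\<integral>x. real_of_int (Y i x $ j) \<partial>M)" .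
  have "(\<integral>x. ?b x * real_of_int ((Y' i x - Y i x) $ j) \<partial>M)
      = (\<integral>x. ?b x * real_of_int (Y' i x $ j) - ?b x * real_of_int (Y i x $ j) \<partial>M)"
    by (simp add: algebra_simps)
  also have "\<dots> = (\<integral>x. ?b x * real_of_int (Y' i x $ j) \<partial>M) - (\<integral>x. ?b x * real_of_int (Y i x $ j) \<partial>M)"
    by (intro Bochner_Integration.integral_diff integrable_bounded_mult[OF _ bM b1] iY iY')
  finally show ?thesis unfolding Y'part .
qed

lemma integral_indicator_W_mult_xi_coord:
  "(\<integral>x. indicator B (W x) * real_of_int (xi x $ j) \<partial>M)
     = (\<integral>x. indicator B (W x) * (- (real_of_int (W x $ j) - (\<integral>y. real_of_int (W y $ j) \<partial>M)) / real m) \<partial>M)"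
proof -
  define E where "E = (\<integral>y. real_of_int (W y $ j) \<partial>M)"
  let ?b = "\<lambda>x. indicator B (W x) :: real"
  have bM: "?b \<in> borel_measurable M" by (rule measurable_count_space_compose[OF measurable_W]) simp
  have b1: "\<bar>?b x\<bar> \<le> 1" for x by (simp add: indicator_def)
  have "(\<integral>x. ?b x * real_of_int (xi x $ j) \<partial>M)
      = (\<Sum>i\<in>{1..m}. \<integral>x. ?b x * real_of_int ((Y' i x - Y i x) $ j) \<partial>M) / real m"
    using integral_resampled[of "\<lambda>i w y y'. indicator B w * real_of_int ((y' - y) $ j)"]
      integrable_bounded_mult[OF integrable_cubically_bounded_jump[OF _ cubically_bounded_coord] bM b1]
    by (simp add: xi_def)
  also have "\<dots> = (\<Sum>i\<in>{1..m}. (\<integral>x. ?b x \<partial>M) * (\<integral>x. real_of_int (Y i x $ j) \<partial>M)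
      - (\<integral>x. ?b x * real_of_int (Y i x $ j) \<partial>M)) / real m"
    by (intro arg_cong[where f="\<lambda>s. s / real m"] sum.cong refl integral_indicator_W_mult_jump_coord)
  also have "\<dots> = (E * (\<integral>x. ?b x \<partial>M) - (\<integral>x. ?b x * real_of_int (W x $ j) \<partial>M)) / real m"
  proof -
    have "E = (\<Sum>i\<in>{1..m}. \<integral>x. real_of_int (Y i x $ j) \<partial>M)"
      unfolding E_def coord_W_eq_sum by (rule Bochner_Integration.integral_sum) (rule integrable_coord_Y)
    moreover have "(\<integral>x. ?b x * real_of_int (W x $ j) \<partial>M)
        = (\<Sum>i\<in>{1..m}. \<integral>x. ?b x * real_of_int (Y i x $ j) \<partial>M)"
      unfolding coord_W_eq_sum sum_distrib_left
      by (rule Bochner_Integration.integral_sum) (rule integrable_bounded_mult[OF integrable_coord_Y bM b1])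
    ultimately show ?thesis
      by (simp add: sum_subtractf sum_distrib_left mult.commute)
  qed
  also have "\<dots> = (\<integral>x. ?b x * (- (real_of_int (W x $ j) - E) / real m) \<partial>M)"
    using integrable_bounded_mult[OF integrable_coord_W bM b1] bM b1
    by (simp add: algebra_simps integrable_const_bound[where B=1] flip: diff_divide_distrib)
  finally show ?thesis unfolding E_def .
qed

lemma cond_exp_xi_coord:
  "AE x in M. real_cond_exp M W_algebra (\<lambda>y. real_of_int (xi y $ j)) x
     = - (real_of_int (W x $ j) - (\<integral>y. real_of_int (W y $ j) \<partial>M)) / real m"
proof -
  interpret SF: finite_measure_subalgebra M W_algebra by (rule W_algebra_subalgebra)
  show ?thesis
  proof (rule SF.real_cond_exp_charact)
    fix A assume "A \<in> sets W_algebra"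
    then obtain B where A: "A = W -` B \<inter> space M" by (auto simp: sets_W_algebra)
    have "(\<integral>x\<in>A. h x \<partial>M) = (\<integral>x. indicator B (W x) * h x \<partial>M)" for h :: "'a \<Rightarrow> real"
      unfolding set_lebesgue_integral_def A
      by (rule Bochner_Integration.integral_cong[OF refl]) (simp add: indicator_def)
    then show "(\<integral>x\<in>A. real_of_int (xi x $ j) \<partial>M)
        = (\<integral>x\<in>A. - (real_of_int (W x $ j) - (\<integral>y. real_of_int (W y $ j) \<partial>M)) / real m \<partial>M)"
      by (simp only: integral_indicator_W_mult_xi_coord)
  next
    show "integrable M (\<lambda>y. real_of_int (xi y $ j))"
      by (rule integrable_cubically_bounded_xi[OF cubically_bounded_coord])
  next
    show "integrable M (\<lambda>x. - (real_of_int (W x $ j) - (\<integral>y. real_of_int (W y $ j) \<partial>M)) / real m)"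
      using integrable_coord_W by simp
  next
    show "(\<lambda>x. - (real_of_int (W x $ j) - (\<integral>y. real_of_int (W y $ j) \<partial>M)) / real m) \<in> borel_measurable W_algebra"
      by (rule measurable_W_algebra)
  qed
qed

end

theorem mainTheorem10:
  fixes M :: "'a measure"
    and m :: nat
    and Y Y' :: "nat \<Rightarrow> 'a \<Rightarrow> int ^ 'd"
    and K :: "'a \<Rightarrow> nat"
    and W :: "'a \<Rightarrow> int ^ 'd"
    and Wi :: "nat \<Rightarrow> 'a \<Rightarrow> int ^ 'd"
  assumes P: "prob_space M"
    and m_pos: "m \<ge> 1"
    and Y_meas: "\<And>i. i \<in> {1..m} \<Longrightarrow> Y i \<in> measurable M (count_space UNIV)"
    and Y'_meas: "\<And>i. i \<in> {1..m} \<Longrightarrow> Y' i \<in> measurable M (count_space UNIV)"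
    and K_meas: "K \<in> measurable M (count_space UNIV)"
    and third_moments: "\<And>i. i \<in> {1..m} \<Longrightarrow> integrable M (\<lambda>x. norm (rvec (Y i x)) ^ 3)"
    and indep: "prob_space.indep_vars M (\<lambda>_. count_space UNIV)
          (\<lambda>t x. case t of Some (Inl i) \<Rightarrow> Inl (Y i x)
                         | Some (Inr i) \<Rightarrow> Inl (Y' i x)
                         | None \<Rightarrow> Inr (K x))
          (Some ` Inl ` {1..m} \<union> Some ` Inr ` {1..m} \<union> {None})"
    and copy: "\<And>i. i \<in> {1..m} \<Longrightarrow>
          distr M (count_space UNIV) (Y' i) = distr M (count_space UNIV) (Y i)"
    and K_range: "\<And>x. x \<in> space M \<Longrightarrow> K x \<in> {1..m}"
    and K_unif: "\<And>k. k \<in> {1..m} \<Longrightarrow> measure M {x \<in> space M. K x = k} = 1 / real m"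
    and W_def: "W \<equiv> (\<lambda>x. \<Sum>i\<in>{1..m}. Y i x)"
    and Wi_def: "Wi \<equiv> (\<lambda>i x. W x - Y i x)"
    and W'_def: "W' \<equiv> (\<lambda>x. W x - Y (K x) x + Y' (K x) x)"
    and xi_def: "\<xi> \<equiv> (\<lambda>x. rvec (W' x - W x))"
    and F_def: "F \<equiv> vimage_algebra (space M) W (count_space UNIV)"
    and sigma2_def: "\<sigma>2 \<equiv> (\<lambda>j k. integral\<^sup>L M (\<lambda>x. \<xi> x $ j * \<xi> x $ k))"
    and chi_def: "\<chi>3 \<equiv> integral\<^sup>L M (\<lambda>x. norm (\<xi> x) ^ 3)"
    and R2_def: "R2 \<equiv> (\<lambda>j k x. real_cond_exp M F (\<lambda>y. \<xi> y $ j * \<xi> y $ k) x - \<sigma>2 j k)"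
    and eps_def: "\<epsilon> \<equiv> Max ((\<lambda>(i, j). tv_dist (distr M (count_space UNIV) (Wi i))
                           (distr M (count_space UNIV) (\<lambda>x. Wi i x + unitv j)))
                        ` ({1..m} \<times> UNIV))"
  shows "(\<forall>j. AE x in M. real_cond_exp M F (\<lambda>y. \<xi> y $ j) x
              = - (rvec (W x) $ j - integral\<^sup>L M (\<lambda>y. rvec (W y) $ j)) / real m)
       \<and> integral\<^sup>L M (\<lambda>x. \<Sum>j\<in>UNIV. \<Sum>k\<in>UNIV. \<bar>R2 j k x\<bar>)
           \<le> 4 * \<epsilon> * integral\<^sup>L M (\<lambda>x. (\<Sum>j\<in>UNIV. \<bar>\<xi> x $ j\<bar>) ^ 3)
       \<and> 4 * \<epsilon> * integral\<^sup>L M (\<lambda>x. (\<Sum>j\<in>UNIV. \<bar>\<xi> x $ j\<bar>) ^ 3)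
           \<le> 4 * \<epsilon> * real CARD('d) powr (3/2) * \<chi>3"
proof -
  interpret P: prob_space M by (rule P)
  interpret S: resampling M m Y Y' K
    by unfold_locales (use m_pos Y_meas Y'_meas K_meas third_moments indep copy K_range K_unif in auto)
  have W: "W = S.W" unfolding W_def S.W_def ..
  have Wi: "Wi = S.Wi" unfolding Wi_def S.Wi_def W ..
  have eps: "\<epsilon> = S.tv_eps" unfolding eps_def S.tv_eps_def Wi ..
  have F: "F = S.W_algebra" unfolding F_def S.W_algebra_def W ..
  have \<xi>: "\<xi> = (\<lambda>x. rvec (S.xi x))" unfolding xi_def W'_def S.xi_def by (simp add: algebra_simps)
  have norm1_\<xi>: "(\<Sum>j\<in>UNIV. \<bar>\<xi> x $ j\<bar>) = norm1 (S.xi x)" for x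
    by (simp add: \<xi> norm1_rvec)
  show ?thesis
  proof (intro conjI)
    show "\<forall>j. AE x in M. real_cond_exp M F (\<lambda>y. \<xi> y $ j) x
        = - (rvec (W x) $ j - integral\<^sup>L M (\<lambda>y. rvec (W y) $ j)) / real m"
      using S.cond_exp_xi_coord by (simp add: F W \<xi> rvec_def)
    show "integral\<^sup>L M (\<lambda>x. \<Sum>j\<in>UNIV. \<Sum>k\<in>UNIV. \<bar>R2 j k x\<bar>)
        \<le> 4 * \<epsilon> * integral\<^sup>L M (\<lambda>x. (\<Sum>j\<in>UNIV. \<bar>\<xi> x $ j\<bar>) ^ 3)"
      using S.integral_sum_abs_cond_exp_remainder_le
      unfolding R2_def sigma2_def F eps norm1_\<xi> by (simp add: \<xi> rvec_def coord_prod_def)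
    show "4 * \<epsilon> * integral\<^sup>L M (\<lambda>x. (\<Sum>j\<in>UNIV. \<bar>\<xi> x $ j\<bar>) ^ 3)
        \<le> 4 * \<epsilon> * real CARD('d) powr (3/2) * \<chi>3"
      using mult_left_mono[OF S.integral_norm1_xi_cube_le, of "4 * \<epsilon>"] S.tv_eps_nonneg
      unfolding norm1_\<xi> chi_def eps by (simp add: \<xi> mult.assoc)
  qed
qed
end
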